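(* Let $A\in\mathbb{R}^{n\times n}$ be such that $\Lambda_1$ is complex, i.e. the set of eigenvalues of $A$ with maximal real part consists exactly of a pair of simple complex conjugate eigenvalues $\lambda_1,\overline{\lambda_1}$ with $\omega_1=\operatorname{Im}\lambda_1>0$. Let $y_0\in\mathbb{R}^n$ and $\hat z_0\in\mathbb{R}^n$, $\|\hat z_0\|=1$, with $w^{(1)}y_0\neq0$ and $w^{(1)}\hat z_0\neq0$. Then, as $t\to+\infty$, $$K(t,y_0,\hat z_0)\sim \mathrm{OSF}(y_0,\hat z_0)\cdot \mathrm{OT}(t,y_0,\hat z_0),\qquad K(t,y_0)\sim\mathrm{OSF}(y_0)\cdot\mathrm{OT}(t,y_0),$$ where $$\mathrm{OSF}(y_0,\hat z_0)=\frac{|\hat w^{(1)}\hat z_0|}{|\hat w^{(1)}\hat y_0|},\quad \mathrm{OSF}(y_0)=\frac{1}{|\hat w^{(1)}\hat y_0|},\quad \mathrm{OT}(t,y_0,\hat z_0)=\frac{\|\hat\Theta_1(t,\hat z_0)\|}{\|\hat\Theta_1(t,\hat y_0)\|},\quad \mathrm{OT}(t,y_0)=\frac{\|\hat\Theta_1(t)\|}{\|\hat\Theta_1(t,\hat y_0)\|}.$$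
   Context: $\|\cdot\|$ is a vector norm on $\mathbb{C}^n$, used on $\mathbb{R}^n$ by restriction; matrix norms of real matrices are induced over real vectors. $\hat y_0=y_0/\|y_0\|$, $K(t,y_0,\hat z_0)=\|e^{tA}\hat z_0\|/\|e^{tA}\hat y_0\|$, $K(t,y_0)=\|e^{tA}\|/\|e^{tA}\hat y_0\|$ (real induced norm). $w^{(1)}$ (complex row) and $v^{(1)}$ (complex column) are left and right eigenvectors of $A$ for $\lambda_1$; $\hat w^{(1)}=w^{(1)}/\|w^{(1)}\|$ with $\|w^{(1)}\|=\max_{u\in\mathbb{C}^n,\|u\|=1}|w^{(1)}u|$, and $\hat v^{(1)}=v^{(1)}/\|v^{(1)}\|$. Write $\hat v^{(1)}_k=|\hat v^{(1)}_k|e^{\sqrt{-1}\alpha_{1k}}$, $\hat w^{(1)}_l=|\hat w^{(1)}_l|e^{\sqrt{-1}\beta_{1l}}$, and for $u\in\mathbb{R}^n$ with $w^{(1)}u\ne0$, $\hat w^{(1)}u=|\hat w^{(1)}u|e^{\sqrt{-1}\gamma_1(u)}$. Define $\hat\Theta_1(t,u)=\big(|\hat v^{(1)}_k|\cos(\omega_1t+\alpha_{1k}+\gamma_1(u))\big)_{k=1}^n\in\mathbb{R}^n$ and $\hat\Theta_1(t)=\big(|\hat v^{(1)}_k||\hat w^{(1)}_l|\cos(\omega_1t+\alpha_{1k}+\beta_{1l})\big)_{k,l=1}^n\in\mathbb{R}^{n\times n}$. $a(t)\sim b(t)$ means $a(t)/b(t)\to1$ as $t\to+\infty$. *)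

theory Defs
  imports "HOL-Analysis.Analysis" "HOL-Computational_Algebra.Polynomial"
begin

primrec matpow :: "'a::comm_ring_1^'n^'n \<Rightarrow> nat \<Rightarrow> 'a^'n^'n" where
  "matpow M 0 = mat 1"
| "matpow M (Suc k) = M ** matpow M k"

definition mexp :: "real \<Rightarrow> real^'n^'n \<Rightarrow> real^'n^'n" where
  "mexp t A = (\<chi> i j. (\<Sum>k. (t ^ k / fact k) * (matpow A k) $ i $ j))"

definition cvec :: "real^'n \<Rightarrow> complex^'n" where
  "cvec x = (\<chi> i. complex_of_real (x $ i))"

definition cmat :: "real^'n^'n \<Rightarrow> complex^'n^'n" where
  "cmat A = (\<chi> i j. complex_of_real (A $ i $ j))"

definition charpoly :: "real^'n^'n \<Rightarrow> complex poly" where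
  "charpoly A = det (\<chi> i j. (if i = j then [:0, 1:] else 0) - [: complex_of_real (A $ i $ j) :])"

definition eigenvalues :: "real^'n^'n \<Rightarrow> complex set" where
  "eigenvalues A = {z. poly (charpoly A) z = 0}"

definition Lambda1 :: "real^'n^'n \<Rightarrow> complex set" where
  "Lambda1 A = {z \<in> eigenvalues A. \<forall>\<mu> \<in> eigenvalues A. Re \<mu> \<le> Re z}"

definition simple_eigenvalue :: "real^'n^'n \<Rightarrow> complex \<Rightarrow> bool" where
  "simple_eigenvalue A lam \<longleftrightarrow> lam \<in> eigenvalues A \<and> order lam (charpoly A) = 1"

definition rowmul :: "complex^'n \<Rightarrow> complex^'n \<Rightarrow> complex" where
  "rowmul w u = (\<Sum>i\<in>UNIV. w $ i * u $ i)"

definition left_eigvec :: "real^'n^'n \<Rightarrow> complex \<Rightarrow> complex^'n \<Rightarrow> bool" where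
  "left_eigvec A lam w \<longleftrightarrow> w \<noteq> 0 \<and> w v* cmat A = lam *s w"

definition right_eigvec :: "real^'n^'n \<Rightarrow> complex \<Rightarrow> complex^'n \<Rightarrow> bool" where
  "right_eigvec A lam v \<longleftrightarrow> v \<noteq> 0 \<and> cmat A *v v = lam *s v"

definition is_cnorm :: "(complex^'n \<Rightarrow> real) \<Rightarrow> bool" where
  "is_cnorm N \<longleftrightarrow> (\<forall>x. N x = 0 \<longleftrightarrow> x = 0) \<and> (\<forall>c x. N (c *s x) = cmod c * N x)
     \<and> (\<forall>x y. N (x + y) \<le> N x + N y)"

definition rnorm :: "(complex^'n \<Rightarrow> real) \<Rightarrow> real^'n \<Rightarrow> real" where
  "rnorm N x = N (cvec x)"

definition mnorm :: "(complex^'n \<Rightarrow> real) \<Rightarrow> real^'n^'n \<Rightarrow> real" where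
  "mnorm N M = Sup {rnorm N (M *v x) | x. rnorm N x = 1}"

definition rownorm :: "(complex^'n \<Rightarrow> real) \<Rightarrow> complex^'n \<Rightarrow> real" where
  "rownorm N w = Sup {cmod (rowmul w u) | u. N u = 1}"

definition normalize_row :: "(complex^'n \<Rightarrow> real) \<Rightarrow> complex^'n \<Rightarrow> complex^'n" where
  "normalize_row N w = complex_of_real (1 / rownorm N w) *s w"

definition normalize_col :: "(complex^'n \<Rightarrow> real) \<Rightarrow> complex^'n \<Rightarrow> complex^'n" where
  "normalize_col N v = complex_of_real (1 / N v) *s v"

definition normalize_real :: "(complex^'n \<Rightarrow> real) \<Rightarrow> real^'n \<Rightarrow> real^'n" where
  "normalize_real N y = (1 / rnorm N y) *\<^sub>R y"

definition K2 :: "(complex^'n \<Rightarrow> real) \<Rightarrow> real^'n^'n \<Rightarrow> real \<Rightarrow> real^'n \<Rightarrow> real^'n \<Rightarrow> real" where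
  "K2 N A t y0 z0 = rnorm N (mexp t A *v z0) / rnorm N (mexp t A *v normalize_real N y0)"

definition K1 :: "(complex^'n \<Rightarrow> real) \<Rightarrow> real^'n^'n \<Rightarrow> real \<Rightarrow> real^'n \<Rightarrow> real" where
  "K1 N A t y0 = mnorm N (mexp t A) / rnorm N (mexp t A *v normalize_real N y0)"

text \<open>Theta-hat_1(t,u) and Theta-hat_1(t); vh, wh are the normalized eigenvectors, om = omega_1.
  alpha_k = arg(vh_k), beta_l = arg(wh_l), gamma_1(u) = arg(wh u).\<close>
definition Theta_vec :: "complex^'n \<Rightarrow> complex^'n \<Rightarrow> real \<Rightarrow> real \<Rightarrow> real^'n \<Rightarrow> real^'n" where
  "Theta_vec vh wh om t u =
     (\<chi> k. cmod (vh $ k) * cos (om * t + Arg (vh $ k) + Arg (rowmul wh (cvec u))))"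

definition Theta_mat :: "complex^'n \<Rightarrow> complex^'n \<Rightarrow> real \<Rightarrow> real \<Rightarrow> real^'n^'n" where
  "Theta_mat vh wh om t =
     (\<chi> k l. cmod (vh $ k) * cmod (wh $ l) * cos (om * t + Arg (vh $ k) + Arg (wh $ l)))"

definition asym :: "(real \<Rightarrow> real) \<Rightarrow> (real \<Rightarrow> real) \<Rightarrow> bool" where
  "asym a b \<longleftrightarrow> ((\<lambda>t. a t / b t) \<longlongrightarrow> 1) at_top"

end

(*
  Split C^n into the eigenlines of lam and cnj lam and the complementary A-invariant subspace,
  the common kernel of w and cnj w. On the eigenlines e^(tA) acts as multiplication by e^(t lam)
  and e^(t cnj lam); for real y the two components add up to 2 Re (e^(t lam) (w y / w v) v), which is
  kappa t * Theta_mat t y for a fixed real multiple kappa t of e^(t Re lam). On the complement every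
  eigenvalue has real part below Re lam, since a simple eigenvalue has no eigenvector orthogonal to
  its left eigenvector, so that part of e^(tA) is o(e^(t Re lam)). Hence
  e^(tA) = kappa t (Theta_mat t + S t) with S t -> 0 in the induced norm. Finally Theta_vec t u stays
  away from 0 uniformly in t, because Re (z v) = 0 is impossible for an eigenvector v of a non-real
  eigenvalue; so the perturbation S t does not change the asymptotics of the norm ratios K.
*)

theory Submission
  imports Defs "HOL-Computational_Algebra.Fundamental_Theorem_Algebra"
begin

section \<open>Norms on complex vectors and induced matrix norms\<close>

lemma norm_cvec [simp]: "norm (cvec x) = norm x"
  by (simp add: norm_vec_def cvec_def)

lemma cvec_add: "cvec (x + y) = cvec x + cvec y"
  by (simp add: cvec_def vec_eq_iff)

lemma cvec_diff: "cvec (x - y) = cvec x - cvec y"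
  by (simp add: cvec_def vec_eq_iff)

lemma cvec_scaleR: "cvec (c *\<^sub>R x) = complex_of_real c *s cvec x"
  by (simp add: cvec_def vec_eq_iff)

lemma cvec_eq_0_iff [simp]: "cvec x = 0 \<longleftrightarrow> x = 0"
  by (simp add: cvec_def vec_eq_iff)

lemma cvec_matrix_vector_mult: "cvec (M *v x) = cmat M *v cvec x"
  by (simp add: cmat_def cvec_def matrix_vector_mult_def vec_eq_iff)

lemma asym_perturbed_ratio:
  fixes a b a' b' :: "real \<Rightarrow> real"
  assumes a: "\<And>t. a t \<ge> d" and b: "\<And>t. b t \<ge> d" and d: "d > 0"
    and a': "((\<lambda>t. a' t - a t) \<longlongrightarrow> 0) at_top"
    and b': "((\<lambda>t. b' t - b t) \<longlongrightarrow> 0) at_top"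
  shows "asym (\<lambda>t. a' t / b' t) (\<lambda>t. a t / b t)"
proof -
  have rel: "((\<lambda>t. f' t / f t) \<longlongrightarrow> 1) at_top"
    if f: "\<And>t. f t \<ge> d" and f': "((\<lambda>t. f' t - f t) \<longlongrightarrow> 0) at_top" for f f' :: "real \<Rightarrow> real"
  proof -
    have "((\<lambda>t. (f' t - f t) / f t) \<longlongrightarrow> 0) at_top"
    proof (rule Lim_null_comparison)
      show "\<forall>\<^sub>F t in at_top. norm ((f' t - f t) / f t) \<le> norm (f' t - f t) / d"
        using f d by (intro always_eventually allI) (simp add: abs_divide frac_le order_trans[OF _ f])
      show "((\<lambda>t. norm (f' t - f t) / d) \<longlongrightarrow> 0) at_top"
        using tendsto_divide_zero[OF tendsto_norm_zero[OF f']] .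
    qed
    moreover have "(f' t - f t) / f t = f' t / f t - 1" for t
      using f[of t] d by (simp add: diff_divide_distrib)
    ultimately show ?thesis
      by (simp add: LIM_zero_cancel)
  qed
  have lim: "((\<lambda>t. (a' t / a t) / (b' t / b t)) \<longlongrightarrow> 1 / 1) at_top"
    by (intro tendsto_divide rel a a' b b') simp
  have "(a' t / b' t) / (a t / b t) = (a' t / a t) / (b' t / b t)" for t
    using a[of t] b[of t] d by (simp add: field_simps)
  then show ?thesis
    unfolding asym_def using lim by (subst tendsto_cong) (simp_all add: always_eventually)
qed

locale cnorm =
  fixes N :: "complex^'n \<Rightarrow> real"
  assumes is_cnorm: "is_cnorm N"
begin

lemma N_eq_0_iff [simp]: "N x = 0 \<longleftrightarrow> x = 0"
  using is_cnorm unfolding is_cnorm_def by blast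

lemma N_scale: "N (c *s x) = cmod c * N x"
  using is_cnorm unfolding is_cnorm_def by blast

lemma N_triangle: "N (x + y) \<le> N x + N y"
  using is_cnorm unfolding is_cnorm_def by blast

lemma N_zero [simp]: "N 0 = 0"
  by simp

lemma N_minus: "N (- x) = N x"
  using N_scale[of "-1" x] by simp

lemma N_nonneg [simp]: "N x \<ge> 0"
  using N_triangle[of x "-x"] N_minus[of x] by simp

lemma N_pos_iff: "N x > 0 \<longleftrightarrow> x \<noteq> 0"
  using N_nonneg[of x] N_eq_0_iff[of x] by linarith

lemma N_diff_abs_le: "\<bar>N x - N y\<bar> \<le> N (x - y)"
  using N_triangle[of "x - y" y] N_triangle[of "y - x" x] N_minus[of "x - y"]
  by (simp add: abs_le_iff)

lemma N_sum_le: "N (\<Sum>i\<in>S. f i) \<le> (\<Sum>i\<in>S. N (f i))"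
proof (induction S rule: infinite_finite_induct)
  case (insert x F)
  then show ?case using N_triangle[of "f x" "sum f F"] by simp
qed simp_all

lemma N_le_norm: "N x \<le> (\<Sum>i\<in>UNIV. N (axis i 1)) * norm x"
proof -
  have "N x = N (\<Sum>i\<in>UNIV. x $ i *s axis i 1)"
    by (simp add: basis_expansion)
  also have "\<dots> \<le> (\<Sum>i\<in>UNIV. cmod (x $ i) * N (axis i 1))"
    using N_sum_le[of "\<lambda>i. x $ i *s axis i 1" UNIV] by (simp add: N_scale)
  also have "\<dots> \<le> (\<Sum>i\<in>UNIV. norm x * N (axis i 1))"
    by (intro sum_mono mult_right_mono) (simp_all add: Finite_Cartesian_Product.norm_nth_le)
  finally show ?thesis
    by (simp add: sum_distrib_left mult.commute)
qed

lemma continuous_on_N: "continuous_on S N"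
proof -
  define B where "B = (\<Sum>i\<in>UNIV. N (axis i (1::complex)))"
  have "dist (N x) (N y) \<le> B * dist x y" for x y
    using N_diff_abs_le[of x y] N_le_norm[of "x - y"]
    by (simp add: B_def dist_real_def dist_norm)
  then have "lipschitz_on B UNIV N"
    by (simp add: lipschitz_on_def B_def sum_nonneg)
  then show ?thesis
    using lipschitz_on_continuous_on continuous_on_subset by blast
qed

text \<open>The constant is the minimum of \<open>N\<close> on the compact Euclidean unit sphere.\<close>
lemma N_ge_norm: obtains m where "m > 0" "\<And>x. m * norm x \<le> N x"
proof -
  let ?S = "sphere (0::complex^'n) 1"
  have "?S \<noteq> {}"
    using vector_choose_size[of 1] by (auto simp: sphere_def)
  then obtain x0 where x0: "x0 \<in> ?S" "\<And>y. y \<in> ?S \<Longrightarrow> N x0 \<le> N y"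
    using continuous_attains_inf[OF compact_sphere _ continuous_on_N] by metis
  have "N x0 * norm x \<le> N x" for x
  proof (cases "x = 0")
    case False
    have "complex_of_real (1 / norm x) *s x = (1 / norm x) *\<^sub>R x"
      by (vector scaleR_conv_of_real)
    then have "N x0 \<le> N (complex_of_real (1 / norm x) *s x)"
      using x0(2) False by simp
    then show ?thesis
      using False by (simp add: N_scale field_simps norm_divide)
  qed simp
  moreover have "N x0 > 0"
    using x0(1) by (auto simp: N_pos_iff)
  ultimately show thesis
    using that by blast
qed

lemma rnorm_nonneg [simp]: "rnorm N x \<ge> 0"
  by (simp add: rnorm_def)

lemma rnorm_eq_0_iff [simp]: "rnorm N x = 0 \<longleftrightarrow> x = 0"
  by (simp add: rnorm_def)

lemma rnorm_zero [simp]: "rnorm N 0 = 0"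
  by simp

lemma rnorm_scaleR: "rnorm N (c *\<^sub>R x) = \<bar>c\<bar> * rnorm N x"
  by (simp add: rnorm_def cvec_scaleR N_scale)

lemma rnorm_diff_abs_le: "\<bar>rnorm N x - rnorm N y\<bar> \<le> rnorm N (x - y)"
  unfolding rnorm_def cvec_diff by (rule N_diff_abs_le)

lemma rnorm_normalize [simp]: "x \<noteq> 0 \<Longrightarrow> rnorm N (normalize_real N x) = 1"
  by (simp add: normalize_real_def rnorm_scaleR)

lemma rnorm_matrix_vector_bounded: obtains C where "\<And>x. rnorm N (M *v x) \<le> C * rnorm N x"
proof -
  obtain m where m: "m > 0" "\<And>x. m * norm x \<le> N x"
    using N_ge_norm by blast
  obtain K where K: "K > 0" "\<And>x. norm (M *v x) \<le> norm x * K"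
    using bounded_linear.pos_bounded[OF matrix_vector_mul_bounded_linear] by blast
  define B where "B = (\<Sum>i\<in>UNIV. N (axis i (1::complex)))"
  have "rnorm N (M *v x) \<le> (B * K / m) * rnorm N x" for x
  proof -
    have "rnorm N (M *v x) \<le> B * norm (M *v x)"
      using N_le_norm[of "cvec (M *v x)"] by (simp add: rnorm_def B_def)
    also have "\<dots> \<le> B * (K * (rnorm N x / m))"
    proof (intro mult_left_mono)
      have "norm x \<le> rnorm N x / m"
        using m(1) m(2)[of "cvec x"] by (simp add: rnorm_def field_simps)
      then show "norm (M *v x) \<le> K * (rnorm N x / m)"
        using K(2)[of x] K(1) by (metis mult.commute mult_left_mono order_trans less_imp_le)
    qed (simp add: B_def sum_nonneg)
    finally show ?thesis
      by (simp add: field_simps)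
  qed
  then show thesis
    using that by blast
qed

lemma unit_vector_exists: "\<exists>x. rnorm N x = 1"
  using rnorm_normalize[of "axis undefined 1"] by (metis axis_eq_0_iff one_neq_zero)

lemma rnorm_matrix_vector_le: "rnorm N (M *v x) \<le> mnorm N M * rnorm N x"
proof -
  obtain C where C: "\<And>x. rnorm N (M *v x) \<le> C * rnorm N x"
    using rnorm_matrix_vector_bounded by blast
  have bdd: "bdd_above {rnorm N (M *v x) | x. rnorm N x = 1}"
  proof (rule bdd_aboveI)
    fix y assume "y \<in> {rnorm N (M *v x) | x. rnorm N x = 1}"
    then obtain x where "y = rnorm N (M *v x)" "rnorm N x = 1"
      by blast
    then show "y \<le> C"
      using C[of x] by simp
  qed
  have unit: "rnorm N (M *v u) \<le> mnorm N M" if "rnorm N u = 1" for u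
    unfolding mnorm_def using that by (intro cSup_upper[OF _ bdd]) blast
  show ?thesis
  proof (cases "x = 0")
    case False
    let ?u = "normalize_real N x"
    have "M *v x = rnorm N x *\<^sub>R (M *v ?u)"
      using False by (simp add: normalize_real_def scaleR_matrix_vector_assoc matrix_vector_mult_scaleR)
    then show ?thesis
      using unit[of ?u] False by (simp add: rnorm_scaleR mult.commute[of "rnorm N x"] mult_right_mono)
  qed simp
qed

lemma mnorm_least: "(\<And>x. rnorm N x = 1 \<Longrightarrow> rnorm N (M *v x) \<le> b) \<Longrightarrow> mnorm N M \<le> b"
  unfolding mnorm_def using unit_vector_exists by (intro cSup_least) auto

lemma mnorm_nonneg [simp]: "mnorm N M \<ge> 0"
  using unit_vector_exists rnorm_matrix_vector_le[of M] rnorm_nonneg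
  by (metis mult.right_neutral order_trans)

lemma mnorm_add_le: "mnorm N (M + M') \<le> mnorm N M + mnorm N M'"
proof (rule mnorm_least)
  fix x assume "rnorm N x = 1"
  then have "rnorm N (M *v x) + rnorm N (M' *v x) \<le> mnorm N M + mnorm N M'"
    using rnorm_matrix_vector_le[of M x] rnorm_matrix_vector_le[of M' x] by simp
  moreover have "rnorm N ((M + M') *v x) \<le> rnorm N (M *v x) + rnorm N (M' *v x)"
    unfolding rnorm_def matrix_vector_mult_add_rdistrib cvec_add by (rule N_triangle)
  ultimately show "rnorm N ((M + M') *v x) \<le> mnorm N M + mnorm N M'"
    by linarith
qed

lemma mnorm_scaleR: "mnorm N (c *\<^sub>R M) = \<bar>c\<bar> * mnorm N M"
proof -
  have le: "mnorm N (c *\<^sub>R M) \<le> \<bar>c\<bar> * mnorm N M" for c M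
  proof (rule mnorm_least)
    fix x assume "rnorm N x = 1"
    then show "rnorm N ((c *\<^sub>R M) *v x) \<le> \<bar>c\<bar> * mnorm N M"
      using rnorm_matrix_vector_le[of M x]
      by (simp add: scaleR_matrix_vector_assoc[symmetric] rnorm_scaleR mult_left_mono)
  qed
  show ?thesis
  proof (cases "c = 0")
    case True
    then show ?thesis
      using le[of 0 M] by (simp add: order_antisym)
  next
    case False
    then have "mnorm N M \<le> mnorm N (c *\<^sub>R M) / \<bar>c\<bar>"
      using le[of "1 / c" "c *\<^sub>R M"] by (simp add: abs_divide)
    then have "\<bar>c\<bar> * mnorm N M \<le> mnorm N (c *\<^sub>R M)"
      using False by (simp add: pos_le_divide_eq mult.commute)
    with le[of c M] show ?thesis
      by simp
  qed
qed

lemma mnorm_diff_abs_le: "\<bar>mnorm N M - mnorm N M'\<bar> \<le> mnorm N (M - M')"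
  using mnorm_add_le[of "M - M'" M'] mnorm_add_le[of "M' - M" M] mnorm_scaleR[of "-1" "M - M'"]
  by (simp add: abs_le_iff)

lemma rnorm_perturbation_tendsto:
  assumes "((\<lambda>t. mnorm N (S t)) \<longlongrightarrow> 0) F"
  shows "((\<lambda>t. rnorm N ((T t + S t) *v x) - rnorm N (T t *v x)) \<longlongrightarrow> 0) F"
proof (rule Lim_null_comparison)
  show "\<forall>\<^sub>F t in F. norm (rnorm N ((T t + S t) *v x) - rnorm N (T t *v x)) \<le> mnorm N (S t) * rnorm N x"
  proof (intro always_eventually allI)
    fix t
    have "\<bar>rnorm N ((T t + S t) *v x) - rnorm N (T t *v x)\<bar> \<le> rnorm N (S t *v x)"
      using rnorm_diff_abs_le[of "(T t + S t) *v x" "T t *v x"]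
      by (simp add: matrix_vector_mult_add_rdistrib)
    then show "norm (rnorm N ((T t + S t) *v x) - rnorm N (T t *v x)) \<le> mnorm N (S t) * rnorm N x"
      using rnorm_matrix_vector_le[of "S t" x] by simp
  qed
  show "((\<lambda>t. mnorm N (S t) * rnorm N x) \<longlongrightarrow> 0) F"
    using tendsto_mult_left_zero[OF assms] .
qed

lemma mnorm_perturbation_tendsto:
  assumes "((\<lambda>t. mnorm N (S t)) \<longlongrightarrow> 0) F"
  shows "((\<lambda>t. mnorm N (T t + S t) - mnorm N (T t)) \<longlongrightarrow> 0) F"
proof (rule Lim_null_comparison)
  show "\<forall>\<^sub>F t in F. norm (mnorm N (T t + S t) - mnorm N (T t)) \<le> mnorm N (S t)"
  proof (intro always_eventually allI)
    fix t
    show "norm (mnorm N (T t + S t) - mnorm N (T t)) \<le> mnorm N (S t)"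
      using mnorm_diff_abs_le[of "T t + S t" "T t"] by simp
  qed
qed (fact assms)

lemma asym_norm_ratios_of_scaled_family:
  assumes M: "\<And>t. M t = k t *\<^sub>R (T t + S t)" and k: "\<And>t. k t \<noteq> 0"
    and S: "((\<lambda>t. mnorm N (S t)) \<longlongrightarrow> 0) at_top"
    and d: "d > 0" and u: "rnorm N u = 1"
    and Tu: "\<And>t. rnorm N (T t *v u) \<ge> d" and Tz: "\<And>t. rnorm N (T t *v z) \<ge> d"
  shows "asym (\<lambda>t. rnorm N (M t *v z) / rnorm N (M t *v u))
              (\<lambda>t. rnorm N (T t *v z) / rnorm N (T t *v u))"
    and "asym (\<lambda>t. mnorm N (M t) / rnorm N (M t *v u))
              (\<lambda>t. mnorm N (T t) / rnorm N (T t *v u))"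
proof -
  have rnorm_M: "rnorm N (M t *v x) = \<bar>k t\<bar> * rnorm N ((T t + S t) *v x)" for t x
    by (simp add: M scaleR_matrix_vector_assoc[symmetric] rnorm_scaleR)
  have mnorm_M: "mnorm N (M t) = \<bar>k t\<bar> * mnorm N (T t + S t)" for t
    by (simp add: M mnorm_scaleR)
  have cancel: "\<bar>k t\<bar> * a / (\<bar>k t\<bar> * b) = a / b" for t a b
    using k[of t] by simp
  have "asym (\<lambda>t. rnorm N ((T t + S t) *v z) / rnorm N ((T t + S t) *v u))
             (\<lambda>t. rnorm N (T t *v z) / rnorm N (T t *v u))"
    by (rule asym_perturbed_ratio[OF Tz Tu d rnorm_perturbation_tendsto[OF S]
          rnorm_perturbation_tendsto[OF S]])
  then show "asym (\<lambda>t. rnorm N (M t *v z) / rnorm N (M t *v u))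
                  (\<lambda>t. rnorm N (T t *v z) / rnorm N (T t *v u))"
    by (simp only: rnorm_M cancel)
  have "mnorm N (T t) \<ge> d" for t
    using Tu[of t] rnorm_matrix_vector_le[of "T t" u] u by simp
  then have "asym (\<lambda>t. mnorm N (T t + S t) / rnorm N ((T t + S t) *v u))
             (\<lambda>t. mnorm N (T t) / rnorm N (T t *v u))"
    by (rule asym_perturbed_ratio[OF _ Tu d mnorm_perturbation_tendsto[OF S]
          rnorm_perturbation_tendsto[OF S]])
  then show "asym (\<lambda>t. mnorm N (M t) / rnorm N (M t *v u))
                  (\<lambda>t. mnorm N (T t) / rnorm N (T t *v u))"
    by (simp only: rnorm_M mnorm_M cancel)
qed

end

section \<open>The matrix exponential and scalar linear ODEs\<close>

lemma matpow_Suc_right: "matpow A (Suc k) = matpow A k ** A"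
  by (induction k) (simp_all add: matrix_mul_lid matrix_mul_rid matrix_mul_assoc)

lemma matpow_entry_bound:
  fixes A :: "real^'n^'n"
  shows "\<bar>matpow A k $ i $ j\<bar> \<le> (\<Sum>i\<in>UNIV. \<Sum>j\<in>UNIV. \<bar>A $ i $ j\<bar>) ^ k"
proof (induction k arbitrary: i j)
  case 0
  then show ?case by (simp add: mat_def)
next
  case (Suc k)
  let ?B = "\<Sum>i\<in>UNIV. \<Sum>j\<in>UNIV. \<bar>A $ i $ j\<bar>"
  have "\<bar>matpow A (Suc k) $ i $ j\<bar> \<le> (\<Sum>l\<in>UNIV. \<bar>A $ i $ l\<bar> * \<bar>matpow A k $ l $ j\<bar>)"
    by (simp add: matrix_matrix_mult_def abs_mult[symmetric] sum_abs)
  also have "\<dots> \<le> (\<Sum>l\<in>UNIV. \<bar>A $ i $ l\<bar>) * ?B ^ k"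
    by (simp add: sum_distrib_right sum_mono mult_left_mono Suc.IH)
  also have "\<dots> \<le> ?B * ?B ^ k"
    by (intro mult_right_mono member_le_sum[of i UNIV "\<lambda>i. \<Sum>l\<in>UNIV. \<bar>A $ i $ l\<bar>"])
      (simp_all add: sum_nonneg)
  finally show ?case by simp
qed

lemma summable_mexp_series:
  fixes A :: "real^'n^'n"
  shows "summable (\<lambda>k. (matpow A k $ i $ j / fact k) * t ^ k)"
proof (rule summable_comparison_test'[OF summable_exp])
  let ?B = "\<Sum>i\<in>UNIV. \<Sum>j\<in>UNIV. \<bar>A $ i $ j\<bar>"
  fix k
  have "norm ((matpow A k $ i $ j / fact k) * t ^ k) = \<bar>matpow A k $ i $ j\<bar> * \<bar>t\<bar> ^ k / fact k"
    by (simp add: abs_mult power_abs)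
  also have "\<dots> \<le> ?B ^ k * \<bar>t\<bar> ^ k / fact k"
    by (intro divide_right_mono mult_right_mono matpow_entry_bound) simp_all
  finally show "norm ((matpow A k $ i $ j / fact k) * t ^ k) \<le> inverse (fact k) * (?B * \<bar>t\<bar>) ^ k"
    by (simp add: power_mult_distrib field_simps)
qed

lemma mexp_entry: "mexp t A $ i $ j = (\<Sum>k. (matpow A k $ i $ j / fact k) * t ^ k)"
  unfolding mexp_def by (simp add: field_simps)

lemma mexp_zero: "mexp 0 A = mat 1"
  by (simp only: vec_eq_iff mexp_entry powser_zero) (simp add: mat_def)

text \<open>Termwise differentiation of the power series, using \<open>A\<^sup>k\<^sup>+\<^sup>1 = A\<^sup>k A\<close>.\<close>
lemma mexp_has_real_derivative:
  "((\<lambda>t. mexp t A $ i $ j) has_real_derivative (mexp t A ** A) $ i $ j) (at t)"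
proof -
  let ?c = "\<lambda>i j k. matpow A k $ i $ j / fact k"
  have diffs_eq: "diffs (?c i j) k * t ^ k = (\<Sum>l\<in>UNIV. ?c i l k * t ^ k * A $ l $ j)" for k
  proof -
    have "real (Suc k) * (x / fact (Suc k)) = x / fact k" for x :: real
      by (simp add: fact_Suc del: of_nat_Suc)
    then have "diffs (?c i j) k = (\<Sum>l\<in>UNIV. matpow A k $ i $ l * A $ l $ j) / fact k"
      unfolding diffs_def matpow_Suc_right by (simp add: matrix_matrix_mult_def)
    then show ?thesis
      by (simp add: sum_divide_distrib sum_distrib_left mult_ac)
  qed
  have "(\<Sum>k. diffs (?c i j) k * t ^ k) = (\<Sum>l\<in>UNIV. \<Sum>k. ?c i l k * t ^ k * A $ l $ j)"
    unfolding diffs_eq by (rule suminf_sum) (intro summable_mult2 summable_mexp_series)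
  also have "\<dots> = (\<Sum>l\<in>UNIV. (\<Sum>k. ?c i l k * t ^ k) * A $ l $ j)"
    by (intro sum.cong refl suminf_mult2[symmetric] summable_mexp_series)
  also have "\<dots> = (mexp t A ** A) $ i $ j"
    by (simp add: matrix_matrix_mult_def mexp_entry)
  finally have "(\<Sum>k. diffs (?c i j) k * t ^ k) = (mexp t A ** A) $ i $ j" .
  then show ?thesis
    unfolding mexp_entry
    using termdiffs_strong_converges_everywhere[OF summable_mexp_series, of A i j t] by simp
qed

lemma cmat_one: "cmat (mat 1) = mat 1"
  by (simp add: cmat_def mat_def vec_eq_iff)

abbreviation cmexp :: "real \<Rightarrow> real^'n^'n \<Rightarrow> complex^'n^'n" where
  "cmexp t A \<equiv> cmat (mexp t A)"

lemma cmexp_zero_apply [simp]: "cmexp 0 A *v h = h"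
  by (simp add: mexp_zero cmat_one matrix_vector_mul_lid)

lemma cmexp_has_vector_derivative:
  "((\<lambda>t. (cmexp t A *v h) $ i) has_vector_derivative (cmexp t A *v (cmat A *v h)) $ i) (at t)"
proof -
  have "((\<lambda>t. \<Sum>l\<in>UNIV. complex_of_real (mexp t A $ i $ l) * h $ l) has_vector_derivative
      (\<Sum>l\<in>UNIV. complex_of_real ((mexp t A ** A) $ i $ l) * h $ l)) (at t)"
    by (intro has_vector_derivative_sum has_vector_derivative_mult_left
        has_vector_derivative_of_real mexp_has_real_derivative)
  also have "(\<Sum>l\<in>UNIV. complex_of_real ((mexp t A ** A) $ i $ l) * h $ l) =
      (cmexp t A *v (cmat A *v h)) $ i"
    by (simp add: matrix_matrix_mult_def matrix_vector_mult_def cmat_def sum_distrib_left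
        sum_distrib_right mult.assoc) (rule sum.swap)
  finally show ?thesis
    by (simp add: matrix_vector_mult_def cmat_def)
qed

lemma integrating_factor_has_vector_derivative:
  fixes f g :: "real \<Rightarrow> complex"
  assumes "\<And>t. (f has_vector_derivative (r * f t + g t)) (at t)"
  shows "((\<lambda>s. exp (- (of_real s * r)) * f s) has_vector_derivative
           exp (- (of_real s * r)) * g s) (at s)"
proof -
  have "((\<lambda>z. exp (- (z * r))) has_field_derivative - r * exp (- (of_real s * r))) (at (of_real s))"
    by (auto intro!: derivative_eq_intros)
  from has_vector_derivative_real_field[OF this]
  have "((\<lambda>s. exp (- (of_real s * r))) has_vector_derivative - r * exp (- (of_real s * r))) (at s)"
    by simp
  from has_vector_derivative_mult[OF this assms] show ?thesis
    by (simp add: algebra_simps)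
qed

lemma linear_ode_solution:
  fixes f :: "real \<Rightarrow> complex"
  assumes "\<And>t. (f has_vector_derivative (r * f t)) (at t)"
  shows "f t = exp (of_real t * r) * f 0"
proof -
  have "\<And>s. s \<in> UNIV \<Longrightarrow>
      ((\<lambda>s. exp (- (of_real s * r)) * f s) has_vector_derivative 0) (at s within UNIV)"
    using integrating_factor_has_vector_derivative[of f r "\<lambda>_. 0"] assms by simp
  then obtain c where c: "\<And>s. exp (- (of_real s * r)) * f s = c"
    using has_vector_derivative_zero_constant[OF convex_UNIV] by auto
  have "f t = exp (of_real t * r) * (exp (- (of_real t * r)) * f t)"
    by (metis exp_add exp_zero add.right_inverse mult.assoc mult_1)
  also have "\<dots> = exp (of_real t * r) * f 0"
    using c[of t] c[of 0] by simp
  finally show ?thesis .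
qed

lemma integrating_factor_forcing_bound:
  fixes g :: "real \<Rightarrow> complex"
  assumes g: "\<And>t. t \<ge> 0 \<Longrightarrow> cmod (g t) \<le> C * (1 + t) ^ k * exp (a * t)"
    and a: "Re r \<le> a" and C: "C \<ge> 0" and x: "0 \<le> x" "x \<le> t"
  shows "cmod (exp (- (of_real x * r)) * g x) \<le> C * (1 + t) ^ k * exp ((a - Re r) * t)"
proof -
  have "cmod (exp (- (of_real x * r)) * g x) \<le> exp (- (x * Re r)) * (C * (1 + x) ^ k * exp (a * x))"
    using g[of x] x by (simp add: norm_mult mult_left_mono)
  also have "\<dots> = C * (1 + x) ^ k * exp ((a - Re r) * x)"
  proof -
    have "exp ((a - Re r) * x) = exp (a * x) * exp (- (x * Re r))"
      by (simp add: algebra_simps flip: exp_add)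
    then show ?thesis
      by (simp add: mult_ac)
  qed
  also have "\<dots> \<le> C * (1 + t) ^ k * exp ((a - Re r) * t)"
  proof -
    have "(1 + x) ^ k \<le> (1 + t) ^ k"
      using x by (intro power_mono) auto
    moreover have "(a - Re r) * x \<le> (a - Re r) * t"
      using a x by (intro mult_left_mono) auto
    ultimately show ?thesis
      using C x by (intro mult_mono mult_left_mono) auto
  qed
  finally show ?thesis .
qed

lemma integrating_factor_increment_bound:
  fixes f g :: "real \<Rightarrow> complex"
  assumes f: "\<And>t. (f has_vector_derivative (r * f t + g t)) (at t)"
    and g: "\<And>t. t \<ge> 0 \<Longrightarrow> cmod (g t) \<le> C * (1 + t) ^ k * exp (a * t)"
    and a: "Re r \<le> a" and C: "C \<ge> 0" and t: "t > 0"
  defines "F \<equiv> \<lambda>s. exp (- (of_real s * r)) * f s"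
  shows "cmod (F t - F 0) \<le> t * (C * (1 + t) ^ k * exp ((a - Re r) * t))"
proof -
  note F' = integrating_factor_has_vector_derivative[OF f, folded F_def]
  have "\<exists>x\<in>{0<..<t}. cmod (F t - F 0) \<le> cmod ((t - 0) *\<^sub>R (exp (- (of_real x * r)) * g x))"
  proof (rule mvt_general[OF t])
    show "continuous_on {0..t} F"
      by (rule continuous_on_vector_derivative, rule has_vector_derivative_at_within, rule F')
    show "(F has_derivative (\<lambda>h. h *\<^sub>R (exp (- (of_real x * r)) * g x))) (at x)" for x
      using F'[of x] by (simp add: has_vector_derivative_def)
  qed
  then obtain x where x: "0 < x" "x < t"
    and mvt: "cmod (F t - F 0) \<le> t * cmod (exp (- (of_real x * r)) * g x)"
    using t by auto
  have "t * cmod (exp (- (of_real x * r)) * g x) \<le> t * (C * (1 + t) ^ k * exp ((a - Re r) * t))"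
    using integrating_factor_forcing_bound[OF g a C, of x t] x t by (intro mult_left_mono) simp_all
  with mvt show ?thesis
    by linarith
qed

lemma linear_ode_growth_bound:
  fixes f g :: "real \<Rightarrow> complex"
  assumes f: "\<And>t. (f has_vector_derivative (r * f t + g t)) (at t)"
    and g: "\<And>t. t \<ge> 0 \<Longrightarrow> cmod (g t) \<le> C * (1 + t) ^ k * exp (a * t)"
    and a: "Re r \<le> a" and C: "C \<ge> 0" and t: "t \<ge> 0"
  shows "cmod (f t) \<le> (cmod (f 0) + C) * (1 + t) ^ Suc k * exp (a * t)"
proof (cases "t = 0")
  case False
  define F where "F s = exp (- (of_real s * r)) * f s" for s
  have "f t = exp (of_real t * r) * F t"
    unfolding F_def by (metis exp_add exp_zero add.right_inverse mult.assoc mult_1)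
  then have "cmod (f t) = exp (t * Re r) * cmod (F t)"
    by (simp add: norm_mult)
  also have "\<dots> \<le> exp (t * Re r) * (cmod (f 0) + t * (C * (1 + t) ^ k * exp ((a - Re r) * t)))"
    using integrating_factor_increment_bound[OF f g a C, of t, folded F_def] False t
      norm_triangle_ineq2[of "F t" "F 0"]
    by (intro mult_left_mono) (simp_all add: F_def)
  also have "\<dots> = exp (t * Re r) * cmod (f 0) + t * C * (1 + t) ^ k * exp (a * t)"
  proof -
    have exp_split: "exp (t * Re r) * exp ((a - Re r) * t) = exp (a * t)"
      by (simp add: algebra_simps flip: exp_add)
    show ?thesis
      by (simp add: distrib_left exp_split[symmetric] mult_ac)
  qed
  also have "\<dots> \<le> (cmod (f 0) + C) * (1 + t) ^ Suc k * exp (a * t)"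
  proof -
    have "exp (t * Re r) \<le> 1 * exp (a * t)"
      using mult_left_mono[OF a t] by (simp add: mult.commute)
    also have "\<dots> \<le> (1 + t) ^ Suc k * exp (a * t)"
      using t by (intro mult_right_mono one_le_power) simp_all
    finally have "exp (t * Re r) * cmod (f 0) \<le> (1 + t) ^ Suc k * exp (a * t) * cmod (f 0)"
      by (intro mult_right_mono) simp_all
    moreover have "C * (t * (1 + t) ^ k) * exp (a * t) \<le> C * ((1 + t) * (1 + t) ^ k) * exp (a * t)"
      using t C by (intro mult_right_mono mult_left_mono) auto
    ultimately show ?thesis
      by (simp add: algebra_simps)
  qed
  finally show ?thesis .
qed (simp add: C)

lemma cmexp_eigenvector:
  assumes "cmat A *v e = l *s e"
  shows "cmexp t A *v e = exp (of_real t * l) *s e"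
proof -
  have "(cmexp t A *v e) $ i = exp (of_real t * l) * (cmexp 0 A *v e) $ i" for i
  proof (rule linear_ode_solution)
    show "((\<lambda>t. (cmexp t A *v e) $ i) has_vector_derivative l * (cmexp t A *v e) $ i) (at t)" for t
      using cmexp_has_vector_derivative[of A e i t] assms by (simp add: vector_scalar_commute)
  qed
  then show ?thesis
    by (simp add: vec_eq_iff)
qed

section \<open>Polynomials applied to a matrix\<close>

definition poly_apply :: "'a::field poly \<Rightarrow> 'a^'n^'n \<Rightarrow> 'a^'n \<Rightarrow> 'a^'n" where
  "poly_apply p B h = (\<Sum>k\<le>degree p. coeff p k *s (matpow B k *v h))"

lemma poly_apply_bound_degree:
  assumes "degree p \<le> d"
  shows "poly_apply p B h = (\<Sum>k\<le>d. coeff p k *s (matpow B k *v h))"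
  unfolding poly_apply_def
  by (rule sum.mono_neutral_left) (use assms in \<open>auto simp: coeff_eq_0\<close>)

lemma poly_apply_0 [simp]: "poly_apply 0 B h = 0"
  by (simp add: poly_apply_def)

lemma poly_apply_add: "poly_apply (p + q) B h = poly_apply p B h + poly_apply q B h"
proof -
  let ?d = "max (degree p) (degree q)"
  have "poly_apply (p + q) B h = (\<Sum>k\<le>?d. coeff (p + q) k *s (matpow B k *v h))"
    by (rule poly_apply_bound_degree) (simp add: degree_add_le)
  also have "\<dots> = (\<Sum>k\<le>?d. coeff p k *s (matpow B k *v h)) + (\<Sum>k\<le>?d. coeff q k *s (matpow B k *v h))"
    by (simp add: vector_sadd_rdistrib sum.distrib)
  also have "\<dots> = poly_apply p B h + poly_apply q B h"
    by (simp add: poly_apply_bound_degree[symmetric])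
  finally show ?thesis .
qed

lemma poly_apply_smult: "poly_apply (smult a p) B h = a *s poly_apply p B h"
proof -
  have "poly_apply (smult a p) B h = (\<Sum>k\<le>degree p. coeff (smult a p) k *s (matpow B k *v h))"
    by (rule poly_apply_bound_degree) (rule degree_smult_le)
  then show ?thesis
    by (simp add: poly_apply_def vec.scale_sum_right vector_smult_assoc)
qed

lemma poly_apply_diff: "poly_apply (p - q) B h = poly_apply p B h - poly_apply q B h"
  using poly_apply_add[of "p - q" q B h] by (simp add: algebra_simps)

lemma poly_apply_sum: "poly_apply (\<Sum>k\<in>S. f k) B h = (\<Sum>k\<in>S. poly_apply (f k) B h)"
  by (induction S rule: infinite_finite_induct) (auto simp: poly_apply_add)

lemma matrix_vector_mult_sum: "B *v (\<Sum>k\<in>S. f k) = (\<Sum>k\<in>S. B *v f k)"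
  by (induction S rule: infinite_finite_induct) (auto simp: matrix_vector_right_distrib)

lemma poly_apply_pCons: "poly_apply (pCons a p) B h = a *s h + B *v poly_apply p B h"
proof -
  have "poly_apply (pCons a p) B h = (\<Sum>k\<le>Suc (degree p). coeff (pCons a p) k *s (matpow B k *v h))"
    by (rule poly_apply_bound_degree) (simp add: degree_pCons_le)
  also have "\<dots> = a *s h + (\<Sum>k\<le>degree p. coeff p k *s (matpow B (Suc k) *v h))"
    by (subst sum.atMost_Suc_shift) (simp add: matrix_vector_mul_lid)
  also have "(\<Sum>k\<le>degree p. coeff p k *s (matpow B (Suc k) *v h)) = B *v poly_apply p B h"
    by (simp add: poly_apply_def matrix_vector_mult_sum vector_scalar_commute matrix_vector_mul_assoc)
  finally show ?thesis .
qed

lemma poly_apply_mult: "poly_apply (p * q) B h = poly_apply p B (poly_apply q B h)"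
proof (induction p rule: pCons_induct)
  case (pCons a p)
  have "poly_apply (pCons a p * q) B h = poly_apply (smult a q) B h + poly_apply (pCons 0 (p * q)) B h"
    by (simp add: poly_apply_add)
  also have "\<dots> = poly_apply (pCons a p) B (poly_apply q B h)"
    by (simp add: poly_apply_smult poly_apply_pCons pCons.IH)
  finally show ?case .
qed simp

lemma poly_apply_const: "poly_apply [:c:] B h = c *s h"
  by (simp add: poly_apply_def matrix_vector_mul_lid)

lemma poly_apply_one: "poly_apply 1 B h = h"
  using poly_apply_const[of 1 B h] by (simp add: one_pCons)

lemma poly_apply_linear: "poly_apply [:-c, 1:] B h = B *v h - c *s h"
  using poly_apply_pCons[of "-c" "[:1:]" B h] poly_apply_const[of 1 B h]
  by (simp add: vec_eq_iff)

lemma poly_apply_monom: "poly_apply (monom c k) B h = c *s (matpow B k *v h)"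
proof -
  have "poly_apply (monom c k) B h = (\<Sum>j\<le>k. coeff (monom c k) j *s (matpow B j *v h))"
    by (rule poly_apply_bound_degree) (rule degree_monom_le)
  then show ?thesis
    by (simp add: if_distrib[of "\<lambda>x. x *s _"] cong: if_cong)
qed

lemma rowmul_matrix_vector_mult: "rowmul w (B *v y) = rowmul (w v* B) y"
  unfolding rowmul_def matrix_vector_mult_def vector_matrix_mult_def
  by (simp add: sum_distrib_left sum_distrib_right mult_ac) (rule sum.swap)

lemma rowmul_add: "rowmul w (x + y) = rowmul w x + rowmul w y"
  by (simp add: rowmul_def distrib_left sum.distrib)

lemma rowmul_diff: "rowmul w (x - y) = rowmul w x - rowmul w y"
  by (simp add: rowmul_def right_diff_distrib sum_subtractf)

lemma rowmul_scale_right: "rowmul w (c *s x) = c * rowmul w x"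
  by (simp add: rowmul_def sum_distrib_left mult_ac)

lemma rowmul_scale_left: "rowmul (c *s w) x = c * rowmul w x"
  by (simp add: rowmul_def sum_distrib_left mult_ac)

lemma rowmul_poly_apply_left_eigvec:
  assumes "w v* B = l *s w"
  shows "rowmul w (poly_apply p B h) = poly p l * rowmul w h"
  by (induction p rule: pCons_induct)
    (simp_all add: rowmul_def[of w 0] poly_apply_pCons rowmul_add rowmul_scale_right
      rowmul_scale_left rowmul_matrix_vector_mult assms algebra_simps)

lemma poly_apply_annihilator_of_dependent_powers:
  fixes B :: "'a::field^'n^'n"
  assumes inj: "inj_on (\<lambda>k. matpow B k *v h) {..n}"
    and dep: "vec.dependent ((\<lambda>k. matpow B k *v h) ` {..n})"
  shows "\<exists>p. p \<noteq> 0 \<and> poly_apply p B h = 0"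
proof -
  let ?v = "\<lambda>k. matpow B k *v h"
  obtain u where u: "\<exists>x\<in>?v ` {..n}. u x \<noteq> 0" "(\<Sum>x\<in>?v ` {..n}. u x *s x) = 0"
    using dep vec.dependent_finite[of "?v ` {..n}"] by auto
  define p where "p = (\<Sum>k\<le>n. monom (u (?v k)) k)"
  have "poly_apply p B h = (\<Sum>k\<le>n. u (?v k) *s ?v k)"
    unfolding p_def poly_apply_sum poly_apply_monom ..
  also have "\<dots> = 0"
    using u(2) sum.reindex[OF inj, of "\<lambda>x. u x *s x"] by simp
  finally have "poly_apply p B h = 0" .
  moreover have "p \<noteq> 0"
    using u(1) coeff_sum_monom[of _ n "\<lambda>k. u (?v k)"] unfolding p_def by auto
  ultimately show ?thesis
    by blast
qed

text \<open>The Krylov vectors \<open>B\<^sup>k h\<close>, \<open>k \<le> n\<close>, are \<open>n + 1\<close> vectors in an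
  \<open>n\<close>-dimensional space, so some nontrivial combination of them vanishes.\<close>
lemma poly_apply_annihilator_exists:
  fixes B :: "'a::field^'n^'n"
  shows "\<exists>p. p \<noteq> 0 \<and> poly_apply p B h = 0"
proof (cases "inj_on (\<lambda>k. matpow B k *v h) {..CARD('n)}")
  case False
  then obtain i j where ij: "i \<noteq> j" "matpow B i *v h = matpow B j *v h"
    unfolding inj_on_def by blast
  have "coeff (monom (1::'a) i - monom 1 j) i = 1"
    using ij by simp
  then have "monom (1::'a) i - monom 1 j \<noteq> 0"
    by (metis coeff_0 zero_neq_one)
  moreover have "poly_apply (monom 1 i - monom 1 j) B h = 0"
    using ij by (simp add: poly_apply_diff poly_apply_monom)
  ultimately show ?thesis
    by blast
next
  case True
  let ?S = "(\<lambda>k. matpow B k *v h) ` {..CARD('n)}"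
  have "vec.dim ?S < card ?S"
    using True dim_subset_UNIV_cart_gen[of ?S] by (simp add: card_image)
  then have "vec.dependent ?S"
    by (intro vec.dependent_biggerset_general) simp
  with True show ?thesis
    by (rule poly_apply_annihilator_of_dependent_powers)
qed

lemma minimal_annihilator_exists:
  fixes B :: "'a::field^'n^'n"
  shows "\<exists>p. p \<noteq> 0 \<and> poly_apply p B h = 0 \<and>
    (\<forall>q. q \<noteq> 0 \<and> poly_apply q B h = 0 \<longrightarrow> degree p \<le> degree q)"
  using poly_apply_annihilator_exists[of B h]
    ex_has_least_nat[of "\<lambda>p. p \<noteq> 0 \<and> poly_apply p B h = 0" _ degree] by blast

text \<open>Dividing a root \<open>r\<close> out of a minimal annihilator leaves a polynomial \<open>s\<close> with
  \<open>s(B) h \<noteq> 0\<close> but \<open>(B - r) s(B) h = 0\<close>.\<close>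
lemma minimal_annihilator_root_eigenvector:
  fixes B :: "'a::field^'n^'n"
  assumes p: "p \<noteq> 0" "poly_apply p B h = 0"
    and minimal: "\<forall>q. q \<noteq> 0 \<and> poly_apply q B h = 0 \<longrightarrow> degree p \<le> degree q"
    and r: "poly p r = 0"
  shows "\<exists>s. poly_apply s B h \<noteq> 0 \<and> B *v poly_apply s B h = r *s poly_apply s B h"
proof -
  obtain s where ps: "p = [:-r, 1:] * s"
    using r poly_eq_0_iff_dvd by (metis dvdE)
  then have "s \<noteq> 0"
    using p(1) by auto
  moreover have "degree p = Suc (degree s)"
    unfolding ps using \<open>s \<noteq> 0\<close> by (subst degree_mult_eq) auto
  ultimately have "poly_apply s B h \<noteq> 0"
    using minimal by (metis Suc_n_not_le_n)
  moreover have "poly_apply [:-r, 1:] B (poly_apply s B h) = 0"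
    using p(2) unfolding ps poly_apply_mult .
  ultimately show ?thesis
    unfolding poly_apply_linear by auto
qed

text \<open>Each component \<open>f\<close> of \<open>e\<^sup>t\<^sup>A h\<close> solves \<open>f' = x f + g\<close>, where \<open>g\<close> is the same
  component for \<open>(A - x) h\<close>, which is annihilated by the remaining factors.\<close>
lemma annihilated_by_linear_factors_growth_bound:
  fixes A :: "real^'n^'n"
  assumes "poly_apply (\<Prod>x\<leftarrow>L. [:-x, 1:]) (cmat A) h = 0" "\<forall>x\<in>set L. Re x \<le> a"
  shows "\<exists>C\<ge>0. \<forall>t\<ge>0. \<forall>i. cmod ((cmexp t A *v h) $ i) \<le> C * (1 + t) ^ length L * exp (a * t)"
  using assms
proof (induction L arbitrary: h)
  case Nil
  then show ?case
    by (intro exI[of _ 0]) (simp add: poly_apply_one)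
next
  case (Cons x L)
  define h' where "h' = cmat A *v h - x *s h"
  have "poly_apply (\<Prod>x\<leftarrow>L. [:-x, 1:]) (cmat A) h' = poly_apply ((\<Prod>x\<leftarrow>L. [:-x, 1:]) * [:-x, 1:]) (cmat A) h"
    unfolding poly_apply_mult h'_def poly_apply_linear ..
  also have "\<dots> = 0"
    using Cons.prems(1) by (simp add: mult.commute)
  finally obtain C' where C': "C' \<ge> 0"
    "\<And>t i. t \<ge> 0 \<Longrightarrow> cmod ((cmexp t A *v h') $ i) \<le> C' * (1 + t) ^ length L * exp (a * t)"
    using Cons.IH Cons.prems(2) by force
  define C where "C = (\<Sum>i\<in>UNIV. cmod (h $ i)) + C'"
  have "cmod ((cmexp t A *v h) $ i) \<le> C * (1 + t) ^ length (x # L) * exp (a * t)" if t: "t \<ge> 0" for t i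
  proof -
    let ?f = "\<lambda>t. (cmexp t A *v h) $ i"
    have "(?f has_vector_derivative x * ?f t + (cmexp t A *v h') $ i) (at t)" for t
      using cmexp_has_vector_derivative[of A h i t]
      by (simp add: h'_def matrix_vector_mult_diff_distrib vector_scalar_commute)
    then have "cmod (?f t) \<le> (cmod (?f 0) + C') * (1 + t) ^ Suc (length L) * exp (a * t)"
      by (rule linear_ode_growth_bound[OF _ C'(2) _ C'(1) t]) (use Cons.prems(2) in auto)
    also have "\<dots> \<le> C * (1 + t) ^ Suc (length L) * exp (a * t)"
    proof -
      have "cmod (?f 0) \<le> (\<Sum>i\<in>UNIV. cmod (h $ i))"
        by simp (rule member_le_sum, simp_all)
      then show ?thesis
        unfolding C_def using t by (intro mult_right_mono) auto
    qed
    finally show ?thesis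
      by simp
  qed
  moreover have "C \<ge> 0"
    unfolding C_def using C'(1) by (simp add: sum_nonneg)
  ultimately show ?case
    by blast
qed

lemma annihilated_growth_bound:
  fixes A :: "real^'n^'n"
  assumes "p \<noteq> 0" "poly_apply p (cmat A) h = 0" "\<And>r. poly p r = 0 \<Longrightarrow> Re r \<le> a"
  shows "\<exists>C k. \<forall>t\<ge>0. \<forall>i. cmod ((cmexp t A *v h) $ i) \<le> C * (1 + t) ^ k * exp (a * t)"
proof -
  obtain L where L: "mset L = proots p"
    using ex_mset by blast
  have "p = smult (lead_coeff p) (\<Prod>x\<in>#proots p. [:-x, 1:])"
    by (rule complex_poly_decompose_multiset[symmetric])
  also have "(\<Prod>x\<in>#proots p. [:-x, 1:]) = (\<Prod>x\<leftarrow>L. [:-x, 1:])"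
    by (simp flip: L prod_mset_prod_list)
  finally have "lead_coeff p *s poly_apply (\<Prod>x\<leftarrow>L. [:-x, 1:]) (cmat A) h = 0"
    using assms(2) by (metis poly_apply_smult)
  then have "poly_apply (\<Prod>x\<leftarrow>L. [:-x, 1:]) (cmat A) h = 0"
    using assms(1) by (simp add: vec_eq_iff)
  moreover have "\<forall>x\<in>set L. Re x \<le> a"
    using L assms(1,3) by (metis set_mset_mset set_count_proots mem_Collect_eq)
  ultimately show ?thesis
    using annihilated_by_linear_factors_growth_bound by blast
qed

section \<open>Multiple roots of the characteristic polynomial\<close>

lemma charpoly_eval: "poly (charpoly A) r = det (mat r - cmat A)"
  unfolding charpoly_def det_def
  by (simp add: poly_sum poly_prod mat_def cmat_def if_distrib[of "\<lambda>p. poly p r"] cong: if_cong)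

lemma eigenvalue_charpoly_root:
  assumes "cmat A *v e = r *s e" "e \<noteq> 0"
  shows "poly (charpoly A) r = 0"
proof (rule ccontr)
  assume "poly (charpoly A) r \<noteq> 0"
  then obtain M where M: "M ** (mat r - cmat A) = mat 1"
    unfolding charpoly_eval invertible_det_nz[symmetric] invertible_def by blast
  have "mat r *v e = r *s e"
    by (simp add: vec_eq_iff matrix_vector_mult_def mat_def if_distrib[of "\<lambda>y. y * _"] cong: if_cong)
  then have "(mat r - cmat A) *v e = 0"
    using assms(1) by (simp add: matrix_vector_mult_diff_rdistrib)
  then have "M *v ((mat r - cmat A) *v e) = 0"
    by simp
  then have "e = 0"
    unfolding matrix_vector_mul_assoc M by (simp add: matrix_vector_mul_lid)
  with assms(2) show False
    by simp
qed

lemma det_row_combination: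
  fixes M :: "'a::comm_ring_1^'n^'n"
  assumes "(\<Sum>j\<in>UNIV. c j *s row j M) = p *s u"
  shows "c k * det M = p * det (\<chi> i. if i = k then u else row i M)"
proof -
  have "det (\<chi> i. if i = k then (\<Sum>j\<in>UNIV. c j *s row j M) else row i M) =
      (\<Sum>j\<in>UNIV. c j * det (\<chi> i. if i = k then row j M else row i M))"
    by (simp add: det_linear_row_sum det_row_mul)
  also have "\<dots> = (\<Sum>j\<in>UNIV. if j = k then c k * det M else 0)"
  proof (rule sum.cong[OF refl])
    fix j
    show "c j * det (\<chi> i. if i = k then row j M else row i M) = (if j = k then c k * det M else 0)"
    proof (cases "j = k")
      case True
      then have "(\<chi> i. if i = k then row j M else row i M) = M"
        by (simp add: vec_eq_iff row_def)
      with True show ?thesis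
        by simp
    next
      case False
      then have "det (\<chi> i. if i = k then row j M else row i M) = 0"
        by (intro det_identical_rows[of k j]) (auto simp: row_def vec_eq_iff)
      with False show ?thesis
        by simp
    qed
  qed
  finally show ?thesis
    using det_row_mul[of k p "\<lambda>_. u" "\<lambda>i. row i M"] unfolding assms by simp
qed

definition charmat :: "real^'n^'n \<Rightarrow> complex poly^'n^'n" where
  "charmat A = (\<chi> i j. (if i = j then [:0, 1:] else 0) - [:complex_of_real (A $ i $ j):])"

lemma sum_pCons_const: "(\<Sum>j\<in>S. [:f j:]) = [:\<Sum>j\<in>S. f j:]"
  by (induction S rule: infinite_finite_induct) auto

lemma charmat_left_eigvec:
  assumes "w v* cmat A = l *s w"
  shows "(\<Sum>j\<in>UNIV. [:w $ j:] *s row j (charmat A)) = [:-l, 1:] *s (\<chi> j. [:w $ j:])"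
proof -
  have "(\<Sum>j\<in>UNIV. [:w $ j:] * charmat A $ j $ m) = [:-l, 1:] * [:w $ m:]" for m
  proof -
    have "(\<Sum>j\<in>UNIV. w $ j * complex_of_real (A $ j $ m)) = l * w $ m"
      using assms by (simp add: vec_eq_iff vector_matrix_mult_def cmat_def)
    then show ?thesis
      by (simp add: charmat_def algebra_simps sum_subtractf sum_pCons_const if_distrib[of "\<lambda>x. _ * x"]
          cong: if_cong)
  qed
  then show ?thesis
    by (simp add: vec_eq_iff row_def sum_component)
qed

lemma charmat_right_eigvec:
  assumes "cmat A *v e = l *s e"
  shows "(\<Sum>j\<in>UNIV. [:e $ j:] * charmat A $ m $ j) = [:-l, 1:] * [:e $ m:]"
proof -
  have "(\<Sum>j\<in>UNIV. complex_of_real (A $ m $ j) * e $ j) = l * e $ m"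
    using assms by (simp add: vec_eq_iff matrix_vector_mult_def cmat_def)
  then show ?thesis
    by (simp add: charmat_def algebra_simps sum_subtractf sum_pCons_const if_distrib[of "\<lambda>x. _ * x"]
        cong: if_cong)
qed

lemma charmat_row_replaced_right_eigvec:
  fixes k :: "'n::finite"
  assumes e: "cmat A *v e = l *s e" and orth: "rowmul w e = 0"
  defines "M \<equiv> \<chi> i. if i = k then (\<chi> j. [:w $ j:]) else row i (charmat A)"
  shows "(\<Sum>j\<in>UNIV. [:e $ j:] *s row j (transpose M)) = [:-l, 1:] *s (\<chi> i. if i = k then 0 else [:e $ i:])"
proof -
  have "(\<Sum>j\<in>UNIV. [:e $ j:] * M $ m $ j) = [:-l, 1:] * (if m = k then 0 else [:e $ m:])" for m
  proof (cases "m = k")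
    case True
    then have "(\<Sum>j\<in>UNIV. [:e $ j:] * M $ m $ j) = [:rowmul w e:]"
      by (simp add: M_def rowmul_def sum_pCons_const mult.commute)
    with True orth show ?thesis
      by simp
  next
    case False
    then show ?thesis
      using charmat_right_eigvec[OF e, of m] by (simp add: M_def row_def)
  qed
  then show ?thesis
    by (simp add: vec_eq_iff row_def sum_component transpose_def)
qed

text \<open>A left and a right eigenvector for \<open>l\<close> that are orthogonal force \<open>l\<close> to be a
  multiple root of the characteristic polynomial: eliminating with the left eigenvector on the
  rows and then with the right eigenvector on the columns of \<open>x I - A\<close> extracts the factor
  \<open>x - l\<close> twice from its determinant.\<close>
lemma charpoly_double_root:
  assumes w: "w \<noteq> 0" "w v* cmat A = l *s w"
    and e: "e \<noteq> 0" "cmat A *v e = l *s e"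
    and orth: "rowmul w e = 0"
  shows "[:-l, 1:] ^ 2 dvd charpoly A"
proof -
  obtain i1 where i1: "w $ i1 \<noteq> 0"
    using w(1) by (metis vec_eq_iff zero_index)
  obtain i0 where i0: "e $ i0 \<noteq> 0"
    using e(1) by (metis vec_eq_iff zero_index)
  define M1 where "M1 = (\<chi> i. if i = i1 then (\<chi> j. [:w $ j:]) else row i (charmat A))"
  define M2 where "M2 = (\<chi> i. if i = i0 then (\<chi> i. if i = i1 then 0 else [:e $ i:]) else row i (transpose M1))"
  have rows: "[:w $ i1:] * det (charmat A) = [:-l, 1:] * det M1"
    unfolding M1_def by (rule det_row_combination[OF charmat_left_eigvec[OF w(2)]])
  have columns: "[:e $ i0:] * det M1 = [:-l, 1:] * det M2"
    using det_row_combination[OF charmat_row_replaced_right_eigvec[OF e(2) orth], of i0 i1]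
    unfolding M1_def[symmetric] M2_def[symmetric] by (simp only: det_transpose)
  have "smult (w $ i1 * e $ i0) (charpoly A) = [:e $ i0:] * ([:w $ i1:] * det (charmat A))"
    by (simp add: charpoly_def charmat_def mult_ac)
  also have "\<dots> = [:-l, 1:] * ([:e $ i0:] * det M1)"
    by (simp only: rows mult.left_commute)
  also have "\<dots> = [:-l, 1:] ^ 2 * det M2"
    by (simp only: columns power2_eq_square mult.assoc)
  finally have "[:-l, 1:] ^ 2 dvd smult (w $ i1 * e $ i0) (charpoly A)"
    by simp
  then show ?thesis
    by (rule dvd_smult_cancel) (use i0 i1 in simp)
qed

section \<open>The dominant complex pair\<close>

definition vcnj :: "complex^'n \<Rightarrow> complex^'n" where
  "vcnj x = (\<chi> i. cnj (x $ i))"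

lemma vcnj_vcnj [simp]: "vcnj (vcnj x) = x"
  by (simp add: vcnj_def vec_eq_iff)

lemma vcnj_eq_0_iff [simp]: "vcnj x = 0 \<longleftrightarrow> x = 0"
  by (simp add: vcnj_def vec_eq_iff)

lemma vcnj_cvec [simp]: "vcnj (cvec y) = cvec y"
  by (simp add: vcnj_def cvec_def vec_eq_iff)

lemma rowmul_vcnj: "rowmul (vcnj a) (vcnj b) = cnj (rowmul a b)"
  by (simp add: rowmul_def vcnj_def)

lemma cmat_vcnj: "cmat A *v vcnj e = vcnj (cmat A *v e)"
  by (simp add: matrix_vector_mult_def cmat_def vcnj_def vec_eq_iff cnj_sum)

lemma vcnj_right_eigvec: "cmat A *v e = l *s e \<Longrightarrow> cmat A *v vcnj e = cnj l *s vcnj e"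
  unfolding cmat_vcnj by (simp add: vcnj_def vec_eq_iff)

lemma vcnj_left_eigvec: "w v* cmat A = l *s w \<Longrightarrow> vcnj w v* cmat A = cnj l *s vcnj w"
proof -
  have "(vcnj w v* cmat A) $ i = cnj ((w v* cmat A) $ i)" for i
    by (simp add: vector_matrix_mult_def cmat_def vcnj_def cnj_sum)
  then show "w v* cmat A = l *s w \<Longrightarrow> vcnj w v* cmat A = cnj l *s vcnj w"
    by (simp add: vec_eq_iff vcnj_def)
qed

locale dominant_complex_pair = cnorm N for N :: "complex^'n \<Rightarrow> real" +
  fixes A :: "real^'n^'n" and lam :: complex and w v :: "complex^'n"
  assumes Lambda1_eq: "Lambda1 A = {lam, cnj lam}"
    and Im_lam_pos: "Im lam > 0"
    and simple: "simple_eigenvalue A lam"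
    and left_eigvec: "left_eigvec A lam w"
    and right_eigvec: "right_eigvec A lam v"
    and Im_rowmul_w_v: "Im (rowmul w v) = 0"
begin

lemma w_nonzero: "w \<noteq> 0" and w_eigen: "w v* cmat A = lam *s w"
  using left_eigvec by (auto simp: left_eigvec_def)

lemma v_nonzero: "v \<noteq> 0" and v_eigen: "cmat A *v v = lam *s v"
  using right_eigvec by (auto simp: right_eigvec_def)

lemma lam_neq_cnj: "lam \<noteq> cnj lam"
  using Im_lam_pos by (metis cnj.sel(2) less_irrefl neg_equal_zero)

lemma Re_charpoly_root_le: "poly (charpoly A) r = 0 \<Longrightarrow> Re r \<le> Re lam"
  using Lambda1_eq unfolding Lambda1_def eigenvalues_def by blast

lemma charpoly_nonzero: "charpoly A \<noteq> 0"
  using Re_charpoly_root_le[of "lam + 1"] by auto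

lemma rowmul_w_eigvec_nonzero:
  assumes "e \<noteq> 0" "cmat A *v e = lam *s e"
  shows "rowmul w e \<noteq> 0"
proof
  assume "rowmul w e = 0"
  then have "[:-lam, 1:] ^ 2 dvd charpoly A"
    using charpoly_double_root[OF w_nonzero w_eigen assms] by blast
  then have "2 \<le> order lam (charpoly A)"
    using charpoly_nonzero by (simp add: order_divides)
  then show False
    using simple unfolding simple_eigenvalue_def by simp
qed

lemma rowmul_w_v_nonzero: "rowmul w v \<noteq> 0"
  by (rule rowmul_w_eigvec_nonzero[OF v_nonzero v_eigen])

text \<open>Left and right eigenvectors for different eigenvalues are orthogonal.\<close>
lemma rowmul_w_vcnj_v: "rowmul w (vcnj v) = 0"
proof -
  have "lam * rowmul w (vcnj v) = rowmul w (cmat A *v vcnj v)"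
    by (simp add: rowmul_matrix_vector_mult w_eigen rowmul_scale_left)
  also have "\<dots> = cnj lam * rowmul w (vcnj v)"
    by (simp add: vcnj_right_eigvec[OF v_eigen] rowmul_scale_right)
  finally show ?thesis
    using lam_neq_cnj by simp
qed

lemma rowmul_vcnj_w_v: "rowmul (vcnj w) v = 0"
  using rowmul_w_vcnj_v rowmul_vcnj[of w "vcnj v"] by simp

text \<open>Such an eigenvalue is neither \<open>\<lambda>\<close> nor \<open>cnj \<lambda>\<close>: a simple eigenvalue has no
  eigenvector orthogonal to its left eigenvector.\<close>
lemma Re_orthogonal_eigenvalue_less:
  assumes e: "e \<noteq> 0" "cmat A *v e = r *s e"
    and orth: "rowmul w e = 0" "rowmul (vcnj w) e = 0"
  shows "Re r < Re lam"
proof -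
  have root: "poly (charpoly A) r = 0"
    by (rule eigenvalue_charpoly_root[OF e(2,1)])
  have "r \<notin> Lambda1 A"
  proof
    assume "r \<in> Lambda1 A"
    then consider "r = lam" | "r = cnj lam"
      using Lambda1_eq by blast
    then show False
    proof cases
      case 1
      then show False
        using rowmul_w_eigvec_nonzero[OF e(1)] e(2) orth(1) by simp
    next
      case 2
      then have "cmat A *v vcnj e = lam *s vcnj e"
        using vcnj_right_eigvec[OF e(2)] by simp
      moreover have "rowmul w (vcnj e) = 0"
        using rowmul_vcnj[of "vcnj w" e] orth(2) by simp
      ultimately show False
        using rowmul_w_eigvec_nonzero[of "vcnj e"] e(1) by simp
    qed
  qed
  then have "Re r \<noteq> Re lam"
    using root Lambda1_eq Re_charpoly_root_le unfolding Lambda1_def eigenvalues_def by auto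
  with Re_charpoly_root_le[OF root] show ?thesis
    by simp
qed

text \<open>On the complement of the dominant pair, the roots of the minimal annihilator are
  eigenvalues with eigenvectors in that complement, hence all have real part below
  \<open>Re \<lambda>\<close>.\<close>
lemma subdominant_growth_bound:
  assumes h: "rowmul w h = 0" "rowmul (vcnj w) h = 0"
  obtains a C k where "a < Re lam"
    "\<And>t i. t \<ge> 0 \<Longrightarrow> cmod ((cmexp t A *v h) $ i) \<le> C * (1 + t) ^ k * exp (a * t)"
proof -
  obtain p where p: "p \<noteq> 0" "poly_apply p (cmat A) h = 0"
    and minimal: "\<forall>q. q \<noteq> 0 \<and> poly_apply q (cmat A) h = 0 \<longrightarrow> degree p \<le> degree q"
    using minimal_annihilator_exists by blast
  have roots: "Re r < Re lam" if r: "poly p r = 0" for r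
  proof -
    obtain s where s: "poly_apply s (cmat A) h \<noteq> 0"
      "cmat A *v poly_apply s (cmat A) h = r *s poly_apply s (cmat A) h"
      using minimal_annihilator_root_eigenvector[OF p minimal r] by blast
    show ?thesis
      using Re_orthogonal_eigenvalue_less[OF s] h
        rowmul_poly_apply_left_eigvec[OF w_eigen] rowmul_poly_apply_left_eigvec[OF vcnj_left_eigvec[OF w_eigen]]
      by simp
  qed
  define a where "a = Max (insert (Re lam - 1) (Re ` {r. poly p r = 0}))"
  have "finite {r. poly p r = 0}"
    using p(1) by (rule poly_roots_finite)
  then have "a < Re lam" "\<And>r. poly p r = 0 \<Longrightarrow> Re r \<le> a"
    using roots by (auto simp: a_def)
  with annihilated_growth_bound[OF p] that show thesis
    by blast
qed

lemma subdominant_vanishes: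
  assumes "rowmul w h = 0" "rowmul (vcnj w) h = 0"
  shows "((\<lambda>t. norm (cmexp t A *v h) / exp (Re lam * t)) \<longlongrightarrow> 0) at_top"
proof -
  obtain a C k where a: "a < Re lam"
    and bound: "\<And>t i. t \<ge> 0 \<Longrightarrow> cmod ((cmexp t A *v h) $ i) \<le> C * (1 + t) ^ k * exp (a * t)"
    using subdominant_growth_bound[OF assms] by blast
  show ?thesis
  proof (rule Lim_null_comparison)
    show "\<forall>\<^sub>F t in at_top. norm (norm (cmexp t A *v h) / exp (Re lam * t))
        \<le> CARD('n) * C * (1 + t) ^ k * exp ((a - Re lam) * t)"
    proof (rule eventually_mono[OF eventually_ge_at_top[of 0]])
      fix t :: real
      assume t: "t \<ge> 0"
      have "norm (cmexp t A *v h) \<le> (\<Sum>i\<in>UNIV. cmod ((cmexp t A *v h) $ i))"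
        by (simp add: norm_vec_def L2_set_le_sum)
      also have "\<dots> \<le> CARD('n) * (C * (1 + t) ^ k * exp (a * t))"
        using sum_mono[of UNIV "\<lambda>i. cmod ((cmexp t A *v h) $ i)", OF bound[OF t]] by simp
      finally show "norm (norm (cmexp t A *v h) / exp (Re lam * t))
          \<le> CARD('n) * C * (1 + t) ^ k * exp ((a - Re lam) * t)"
        by (simp add: left_diff_distrib exp_diff divide_right_mono mult.assoc)
    qed
    show "((\<lambda>t. CARD('n) * C * (1 + t) ^ k * exp ((a - Re lam) * t)) \<longlongrightarrow> 0) at_top"
      using a by real_asymp
  qed
qed

end

lemma norm_vector_scale: "norm (c *s x) = norm c * norm (x :: 'a::real_normed_field^'n)"
  by (simp add: norm_vec_def norm_mult L2_set_right_distrib)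

context dominant_complex_pair
begin

text \<open>The projection onto the sum of the generalized eigenspaces of the eigenvalues other
  than \<open>\<lambda>\<close> and \<open>cnj \<lambda>\<close>, along the two simple eigenlines.\<close>
definition compl_proj :: "complex^'n \<Rightarrow> complex^'n" where
  "compl_proj u = u - (rowmul w u / rowmul w v) *s v
     - (rowmul (vcnj w) u / rowmul (vcnj w) (vcnj v)) *s vcnj v"

lemma rowmul_w_compl_proj: "rowmul w (compl_proj u) = 0"
  using rowmul_w_v_nonzero rowmul_w_vcnj_v
  by (simp add: compl_proj_def rowmul_diff rowmul_scale_right)

lemma rowmul_vcnj_w_compl_proj: "rowmul (vcnj w) (compl_proj u) = 0"
  using rowmul_w_v_nonzero rowmul_vcnj_w_v
  by (simp add: compl_proj_def rowmul_diff rowmul_scale_right rowmul_vcnj)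

lemma compl_proj_add: "compl_proj (x + y) = compl_proj x + compl_proj y"
  unfolding compl_proj_def
  by (simp add: rowmul_add add_divide_distrib vector_sadd_rdistrib algebra_simps)

lemma compl_proj_scale: "compl_proj (a *s x) = a *s compl_proj x"
  unfolding compl_proj_def
  by (simp add: rowmul_scale_right vector_ssub_ldistrib vector_smult_assoc)

lemma compl_proj_sum: "compl_proj (\<Sum>l\<in>S. f l) = (\<Sum>l\<in>S. compl_proj (f l))"
proof (induction S rule: infinite_finite_induct)
  case (insert x F)
  then show ?case
    by (simp add: compl_proj_add)
qed (use compl_proj_scale[of 0 0] in simp_all)

lemma cmexp_decomposition:
  "cmexp t A *v u = (exp (of_real t * lam) * (rowmul w u / rowmul w v)) *s v
     + (exp (of_real t * cnj lam) * (rowmul (vcnj w) u / rowmul (vcnj w) (vcnj v))) *s vcnj v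
     + cmexp t A *v compl_proj u"
proof -
  have u: "u = (rowmul w u / rowmul w v) *s v
      + (rowmul (vcnj w) u / rowmul (vcnj w) (vcnj v)) *s vcnj v + compl_proj u"
    unfolding compl_proj_def by simp
  show ?thesis
    by (subst u) (simp add: matrix_vector_right_distrib vector_scalar_commute
        cmexp_eigenvector[OF v_eigen] cmexp_eigenvector[OF vcnj_right_eigvec[OF v_eigen]]
        vector_smult_assoc mult_ac)
qed

definition compl_growth :: "real \<Rightarrow> real" where
  "compl_growth t = (\<Sum>l\<in>UNIV. norm (cmexp t A *v compl_proj (axis l 1)))"

lemma compl_growth_nonneg: "compl_growth t \<ge> 0"
  unfolding compl_growth_def by (simp add: sum_nonneg)

lemma norm_cmexp_compl_proj_le: "norm (cmexp t A *v compl_proj (cvec y)) \<le> norm y * compl_growth t"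
proof -
  have "cvec y = (\<Sum>l\<in>UNIV. complex_of_real (y $ l) *s axis l 1)"
    using basis_expansion[of "cvec y"] by (simp add: cvec_def)
  then have "cmexp t A *v compl_proj (cvec y)
      = (\<Sum>l\<in>UNIV. complex_of_real (y $ l) *s (cmexp t A *v compl_proj (axis l 1)))"
    by (simp add: compl_proj_sum compl_proj_scale matrix_vector_mult_sum vector_scalar_commute)
  also have "norm \<dots> \<le> (\<Sum>l\<in>UNIV. \<bar>y $ l\<bar> * norm (cmexp t A *v compl_proj (axis l 1)))"
    by (rule order_trans[OF norm_sum]) (simp add: norm_vector_scale)
  also have "\<dots> \<le> (\<Sum>l\<in>UNIV. norm y * norm (cmexp t A *v compl_proj (axis l 1)))"
    by (intro sum_mono mult_right_mono component_le_norm_cart) simp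
  finally show ?thesis
    by (simp add: compl_growth_def sum_distrib_left)
qed

lemma compl_growth_vanishes: "((\<lambda>t. compl_growth t / exp (Re lam * t)) \<longlongrightarrow> 0) at_top"
  unfolding compl_growth_def sum_divide_distrib
  by (intro tendsto_null_sum subdominant_vanishes rowmul_w_compl_proj rowmul_vcnj_w_compl_proj)

abbreviation wh where "wh \<equiv> normalize_row N w"
abbreviation vh where "vh \<equiv> normalize_col N v"
abbreviation Theta where "Theta \<equiv> Theta_vec vh wh (Im lam)"
abbreviation Theta_M where "Theta_M \<equiv> Theta_mat vh wh (Im lam)"

lemma N_v_pos: "N v > 0"
  using v_nonzero by (simp add: N_pos_iff)

lemma v_eq: "v = complex_of_real (N v) *s vh"
  using N_v_pos v_nonzero by (simp add: normalize_col_def vector_smult_assoc)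

lemma N_vh [simp]: "N vh = 1"
  using N_v_pos v_nonzero by (simp add: normalize_col_def N_scale norm_divide)

lemma rownorm_w_pos: "rownorm N w > 0"
proof -
  obtain m where m: "m > 0" "\<And>x. m * norm x \<le> N x"
    using N_ge_norm by blast
  let ?S = "{cmod (rowmul w u) | u. N u = 1}"
  have "bdd_above ?S"
  proof (rule bdd_aboveI)
    fix y assume "y \<in> ?S"
    then obtain u where u: "y = cmod (rowmul w u)" "N u = 1"
      by blast
    have "cmod (rowmul w u) \<le> (\<Sum>i\<in>UNIV. cmod (w $ i) * cmod (u $ i))"
      unfolding rowmul_def by (rule order_trans[OF norm_sum]) (simp add: norm_mult)
    also have "\<dots> \<le> (\<Sum>i\<in>UNIV. cmod (w $ i) * (1 / m))"
    proof (intro sum_mono mult_left_mono)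
      show "cmod (u $ i) \<le> 1 / m" for i
      proof -
        have "m * cmod (u $ i) \<le> m * norm u"
          using m(1) by (intro mult_left_mono Finite_Cartesian_Product.norm_nth_le) simp
        then have "m * cmod (u $ i) \<le> 1"
          using m(2)[of u] u(2) by linarith
        then show ?thesis
          using m(1) by (simp add: pos_le_divide_eq mult.commute)
      qed
    qed simp
    finally show "y \<le> (\<Sum>i\<in>UNIV. cmod (w $ i) * (1 / m))"
      using u(1) by simp
  qed
  moreover have "cmod (rowmul w vh) \<in> ?S"
    using N_vh by blast
  ultimately have "cmod (rowmul w vh) \<le> rownorm N w"
    unfolding rownorm_def by (rule cSup_upper[rotated])
  moreover have "cmod (rowmul w vh) > 0"
    using v_nonzero rowmul_w_v_nonzero by (simp add: normalize_col_def rowmul_scale_right)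
  ultimately show ?thesis
    by linarith
qed

lemma rowmul_wh: "rowmul wh u = complex_of_real (1 / rownorm N w) * rowmul w u"
  unfolding normalize_row_def rowmul_scale_left ..

lemma rowmul_w_eq: "rowmul w u = complex_of_real (rownorm N w) * rowmul wh u"
  using rownorm_w_pos by (simp add: rowmul_wh)

lemma v_nth: "v $ k = complex_of_real (N v) * vh $ k"
  by (subst v_eq) simp

text \<open>The scale of the dominant part: by the normalization \<open>Im (w v) = 0\<close> it is real, and
  \<open>e\<^sup>t\<^sup>A y \<approx> kappa t \<cdot> Theta_M t y\<close>.\<close>
definition kappa :: "real \<Rightarrow> real" where
  "kappa t = 2 * exp (Re lam * t) * rownorm N w * N v / Re (rowmul w v)"

lemma rowmul_w_v_real: "rowmul w v = complex_of_real (Re (rowmul w v))"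
  using Im_rowmul_w_v by (simp add: complex_eq_iff)

lemma Re_rowmul_w_v_nonzero: "Re (rowmul w v) \<noteq> 0"
  using rowmul_w_v_nonzero rowmul_w_v_real by (metis of_real_0)

lemma kappa_nonzero: "kappa t \<noteq> 0"
  unfolding kappa_def using rownorm_w_pos v_nonzero Re_rowmul_w_v_nonzero by simp

lemma abs_kappa: "\<bar>kappa t\<bar> = exp (Re lam * t) * (2 * rownorm N w * N v / \<bar>Re (rowmul w v)\<bar>)"
  unfolding kappa_def using rownorm_w_pos N_v_pos by (simp add: abs_mult)

lemma re_cis_mult: "Re (cis \<theta> * a) = cmod a * cos (\<theta> + Arg a)"
proof -
  have "cis \<theta> * a = rcis (cmod a) (\<theta> + Arg a)"
    by (metis rcis_cmod_Arg cis_rcis_eq rcis_mult mult_1)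
  then show ?thesis
    by simp
qed

lemma re_cis_mult_mult: "Re (cis \<theta> * a * b) = cmod a * cmod b * cos (\<theta> + Arg a + Arg b)"
proof -
  have "cis \<theta> * a * b = rcis (cmod a * cmod b) (\<theta> + Arg a + Arg b)"
    by (metis rcis_cmod_Arg cis_rcis_eq rcis_mult mult_1)
  then show ?thesis
    by simp
qed

lemma Theta_nth: "Theta t y $ k = Re (cis (Im lam * t + Arg (rowmul wh (cvec y))) * vh $ k)"
  unfolding Theta_vec_def re_cis_mult by (simp add: add_ac)

lemma Theta_M_apply_nth: "(Theta_M t *v y) $ k = Re (cis (Im lam * t) * vh $ k * rowmul wh (cvec y))"
proof -
  have "(Theta_M t *v y) $ k = (\<Sum>l\<in>UNIV. Re (cis (Im lam * t) * vh $ k * wh $ l) * y $ l)"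
    unfolding Theta_mat_def matrix_vector_mult_def re_cis_mult_mult by simp
  also have "\<dots> = Re (cis (Im lam * t) * vh $ k * rowmul wh (cvec y))"
    by (simp add: rowmul_def cvec_def sum_distrib_left Re_sum mult_ac)
  finally show ?thesis .
qed

lemma cvec_mexp_decomposition:
  "cvec (mexp t A *v y) = cvec (kappa t *\<^sub>R (Theta_M t *v y)) + cmexp t A *v compl_proj (cvec y)"
proof -
  let ?u = "cvec y"
  define z where "z = exp (of_real t * lam) * (rowmul w ?u / rowmul w v)"
  have z_cnj: "exp (of_real t * cnj lam) * (rowmul (vcnj w) ?u / rowmul (vcnj w) (vcnj v)) = cnj z"
    using rowmul_vcnj[of w ?u] by (simp add: z_def rowmul_vcnj exp_cnj)
  obtain cr where cr: "rowmul w v = complex_of_real cr" "cr \<noteq> 0"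
    using rowmul_w_v_real Re_rowmul_w_v_nonzero by blast
  have zv: "z * v $ k = complex_of_real (kappa t / 2) * (cis (Im lam * t) * vh $ k * rowmul wh ?u)" for k
    using rownorm_w_pos cr(2)
    by (simp add: z_def kappa_def exp_eq_polar cr(1) rowmul_w_eq[of ?u] v_nth field_simps mult.commute)
  have Re_real_mult: "Re (complex_of_real a * b) = a * Re b" for a b
    by simp
  have sum_cnj: "(z *s v + cnj z *s vcnj v) $ k = complex_of_real (2 * Re (z * v $ k))" for k
    using complex_add_cnj[of "z * v $ k"] by (simp add: vcnj_def)
  have Re_zv: "2 * Re (z * v $ k) = kappa t * (Theta_M t *v y) $ k" for k
    unfolding zv Re_real_mult Theta_M_apply_nth by simp
  have "(z *s v + cnj z *s vcnj v) $ k = cvec (kappa t *\<^sub>R (Theta_M t *v y)) $ k" for k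
    unfolding sum_cnj Re_zv by (simp add: cvec_def)
  then have "z *s v + cnj z *s vcnj v = cvec (kappa t *\<^sub>R (Theta_M t *v y))"
    by (simp add: vec_eq_iff)
  moreover have "cvec (mexp t A *v y) = z *s v + cnj z *s vcnj v + cmexp t A *v compl_proj ?u"
    unfolding cvec_matrix_vector_mult z_cnj[symmetric] unfolding z_def by (rule cmexp_decomposition)
  ultimately show ?thesis
    by simp
qed

definition remainder :: "real \<Rightarrow> real^'n^'n" where
  "remainder t = (1 / kappa t) *\<^sub>R mexp t A - Theta_M t"

lemma mexp_eq_kappa_scaled: "mexp t A = kappa t *\<^sub>R (Theta_M t + remainder t)"
  using kappa_nonzero[of t] by (simp add: remainder_def)

lemma cvec_remainder_apply: "cvec (kappa t *\<^sub>R (remainder t *v y)) = cmexp t A *v compl_proj (cvec y)"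
proof -
  have "kappa t *\<^sub>R (remainder t *v y) = mexp t A *v y - kappa t *\<^sub>R (Theta_M t *v y)"
    by (simp add: mexp_eq_kappa_scaled[of t] scaleR_matrix_vector_assoc matrix_vector_mult_add_rdistrib
        scaleR_add_right)
  then show ?thesis
    by (simp add: cvec_diff cvec_mexp_decomposition)
qed

lemma mnorm_remainder_le:
  obtains K where "\<And>t. mnorm N (remainder t) \<le> K * (compl_growth t / exp (Re lam * t))"
proof -
  obtain m where m: "m > 0" "\<And>x. m * norm x \<le> N x"
    using N_ge_norm by blast
  define B where "B = (\<Sum>i\<in>UNIV. N (axis i (1::complex)))"
  define k0 where "k0 = 2 * rownorm N w * N v / \<bar>Re (rowmul w v)\<bar>"
  have k0: "k0 > 0"
    using rownorm_w_pos N_v_pos Re_rowmul_w_v_nonzero by (simp add: k0_def)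
  have "mnorm N (remainder t) \<le> (B / (m * k0)) * (compl_growth t / exp (Re lam * t))" for t
  proof (rule mnorm_least)
    fix y assume y: "rnorm N y = 1"
    have "\<bar>kappa t\<bar> * rnorm N (remainder t *v y) = rnorm N (kappa t *\<^sub>R (remainder t *v y))"
      by (simp add: rnorm_scaleR)
    also have "\<dots> = N (cmexp t A *v compl_proj (cvec y))"
      unfolding rnorm_def cvec_remainder_apply ..
    also have "\<dots> \<le> B * (norm y * compl_growth t)"
      using N_le_norm norm_cmexp_compl_proj_le
      by (metis B_def mult_left_mono order_trans sum_nonneg N_nonneg)
    also have "\<dots> \<le> B * (1 / m * compl_growth t)"
      using m(2)[of "cvec y"] y m(1) compl_growth_nonneg
      by (intro mult_left_mono mult_right_mono) (simp_all add: rnorm_def field_simps B_def sum_nonneg)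
    finally have "(exp (Re lam * t) * k0) * rnorm N (remainder t *v y) \<le> B * (1 / m * compl_growth t)"
      by (simp add: abs_kappa k0_def)
    then show "rnorm N (remainder t *v y) \<le> (B / (m * k0)) * (compl_growth t / exp (Re lam * t))"
      using k0 m(1) by (simp add: field_simps)
  qed
  then show thesis
    using that by blast
qed

lemma remainder_vanishes: "((\<lambda>t. mnorm N (remainder t)) \<longlongrightarrow> 0) at_top"
proof -
  obtain K where K: "\<And>t. mnorm N (remainder t) \<le> K * (compl_growth t / exp (Re lam * t))"
    using mnorm_remainder_le by blast
  show ?thesis
  proof (rule Lim_null_comparison)
    show "\<forall>\<^sub>F t in at_top. norm (mnorm N (remainder t)) \<le> K * (compl_growth t / exp (Re lam * t))"
      using K by (intro always_eventually allI) simp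
    show "((\<lambda>t. K * (compl_growth t / exp (Re lam * t))) \<longlongrightarrow> 0) at_top"
      using tendsto_mult_right_zero[OF compl_growth_vanishes] .
  qed
qed

lemma Theta_M_apply: "Theta_M t *v y = cmod (rowmul wh (cvec y)) *\<^sub>R Theta t y"
proof (rule iffD2[OF vec_eq_iff], rule allI)
  fix k
  have "(Theta_M t *v y) $ k = cmod (vh $ k) * cmod (rowmul wh (cvec y))
      * cos (Im lam * t + Arg (vh $ k) + Arg (rowmul wh (cvec y)))"
    unfolding Theta_M_apply_nth re_cis_mult_mult ..
  then show "(Theta_M t *v y) $ k = (cmod (rowmul wh (cvec y)) *\<^sub>R Theta t y) $ k"
    unfolding Theta_vec_def by (simp add: mult_ac)
qed

text \<open>If \<open>Re (z vh) = 0\<close>, then \<open>z vh\<close>, an eigenvector for \<open>\<lambda>\<close>, would be minus its own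
  conjugate, an eigenvector for \<open>cnj \<lambda> \<noteq> \<lambda>\<close>.\<close>
lemma N_Re_rotated_vh_pos:
  assumes "cmod z = 1"
  shows "N (\<chi> k. complex_of_real (Re (z * vh $ k))) > 0"
proof (rule ccontr)
  assume "\<not> ?thesis"
  then have zero: "(\<chi> k. complex_of_real (Re (z * vh $ k))) = 0"
    by (simp add: N_pos_iff)
  have "Re (z * vh $ k) = 0" for k
    using arg_cong[OF zero, of "\<lambda>x. x $ k"] by (simp only: vec_lambda_beta zero_index of_real_eq_0_iff)
  then have minus: "vcnj (z *s vh) = - (z *s vh)"
    by (simp add: vcnj_def vec_eq_iff complex_eq_iff)
  have eig: "cmat A *v (z *s vh) = lam *s (z *s vh)"
    using v_nonzero N_v_pos
    by (simp add: normalize_col_def vector_scalar_commute v_eigen vector_smult_assoc mult.commute)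
  have "cmat A *v (- (z *s vh)) = - (cmat A *v (z *s vh))"
    using matrix_vector_mult_diff_distrib[of "cmat A" 0 "z *s vh"] by simp
  then have "- (lam *s (z *s vh)) = cnj lam *s (- (z *s vh))"
    using vcnj_right_eigvec[OF eig] unfolding minus eig by (rule trans[OF sym])
  then have "(lam - cnj lam) *s (z *s vh) = 0"
    by (simp add: vec_eq_iff algebra_simps)
  then have "z *s vh = 0"
    using lam_neq_cnj by (simp add: vec_eq_iff)
  then have "vh = 0"
    using assms by (auto simp: vec_eq_iff)
  then show False
    using N_vh by simp
qed

lemma Theta_lower_bound: obtains d where "d > 0" "\<And>t y. rnorm N (Theta t y) \<ge> d"
proof -
  define psi where "psi z = N (\<chi> k. complex_of_real (Re (z * vh $ k)))" for z
  have "continuous_on (sphere 0 1) psi"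
    unfolding psi_def by (intro continuous_on_compose2[OF continuous_on_N] continuous_intros) auto
  moreover have "sphere (0::complex) 1 \<noteq> {}"
    by (auto intro: exI[of _ 1])
  ultimately obtain z0 where z0: "z0 \<in> sphere 0 1" "\<And>z. z \<in> sphere 0 1 \<Longrightarrow> psi z0 \<le> psi z"
    using continuous_attains_inf[OF compact_sphere] by metis
  have "rnorm N (Theta t y) = psi (cis (Im lam * t + Arg (rowmul wh (cvec y))))" for t y
    unfolding rnorm_def psi_def by (simp add: cvec_def Theta_nth)
  then have "rnorm N (Theta t y) \<ge> psi z0" for t y
    using z0(2) by simp
  moreover have "psi z0 > 0"
    using z0(1) N_Re_rotated_vh_pos by (simp add: psi_def)
  ultimately show thesis
    using that by blast
qed

lemma asym_K2_K1:
  assumes z0: "rnorm N z0 = 1"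
    and wy: "rowmul w (cvec y0) \<noteq> 0" and wz: "rowmul w (cvec z0) \<noteq> 0"
  defines "yh \<equiv> normalize_real N y0"
  shows "asym (\<lambda>t. K2 N A t y0 z0)
      (\<lambda>t. (cmod (rowmul wh (cvec z0)) / cmod (rowmul wh (cvec yh))) * (rnorm N (Theta t z0) / rnorm N (Theta t yh)))"
    and "asym (\<lambda>t. K1 N A t y0)
      (\<lambda>t. (1 / cmod (rowmul wh (cvec yh))) * (mnorm N (Theta_M t) / rnorm N (Theta t yh)))"
proof -
  have "y0 \<noteq> 0"
    using wy by (auto simp: cvec_def rowmul_def)
  then have yh: "rnorm N yh = 1"
    by (simp add: yh_def)
  have "cvec yh = complex_of_real (1 / rnorm N y0) *s cvec y0"
    by (simp add: yh_def normalize_real_def cvec_scaleR)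
  then have wyh: "cmod (rowmul wh (cvec yh)) > 0"
    using \<open>y0 \<noteq> 0\<close> wy rownorm_w_pos by (simp add: rowmul_scale_right rowmul_wh)
  have wzh: "cmod (rowmul wh (cvec z0)) > 0"
    using wz rownorm_w_pos by (simp add: rowmul_wh)
  obtain d where d: "d > 0" "\<And>t y. rnorm N (Theta t y) \<ge> d"
    using Theta_lower_bound by blast
  define D where "D = min (cmod (rowmul wh (cvec z0))) (cmod (rowmul wh (cvec yh))) * d"
  have D: "D > 0"
    using wyh wzh d(1) by (simp add: D_def)
  have rnorm_Theta_M: "rnorm N (Theta_M t *v y) = cmod (rowmul wh (cvec y)) * rnorm N (Theta t y)" for t y
    by (simp add: Theta_M_apply rnorm_scaleR)
  have "rnorm N (Theta_M t *v yh) \<ge> D" "rnorm N (Theta_M t *v z0) \<ge> D" for t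
    unfolding rnorm_Theta_M D_def using d wyh wzh by (auto intro!: mult_mono)
  note ratios = asym_norm_ratios_of_scaled_family[OF mexp_eq_kappa_scaled kappa_nonzero
      remainder_vanishes D yh this]
  show "asym (\<lambda>t. K2 N A t y0 z0)
      (\<lambda>t. (cmod (rowmul wh (cvec z0)) / cmod (rowmul wh (cvec yh))) * (rnorm N (Theta t z0) / rnorm N (Theta t yh)))"
    using ratios(1) by (simp add: K2_def yh_def[symmetric] rnorm_Theta_M mult.commute)
  show "asym (\<lambda>t. K1 N A t y0)
      (\<lambda>t. (1 / cmod (rowmul wh (cvec yh))) * (mnorm N (Theta_M t) / rnorm N (Theta t yh)))"
    using ratios(2) by (simp add: K1_def yh_def[symmetric] rnorm_Theta_M mult.commute)
qed

end

theorem theorem7: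
  fixes N :: "complex^'n \<Rightarrow> real"
    and A :: "real^'n^'n"
    and lam1 :: complex
    and w v :: "complex^'n"
    and y0 z0 :: "real^'n"
  assumes norm: "is_cnorm N"
    and Lam: "Lambda1 A = {lam1, cnj lam1}"
    and im_pos: "Im lam1 > 0"
    and simple1: "simple_eigenvalue A lam1"
    and simple2: "simple_eigenvalue A (cnj lam1)"
    and w: "left_eigvec A lam1 w"
    and v: "right_eigvec A lam1 v"
    and wv_real: "Im (rowmul w v) = 0"
    and z0: "rnorm N z0 = 1"
    and wy: "rowmul w (cvec y0) \<noteq> 0"
    and wz: "rowmul w (cvec z0) \<noteq> 0"
  shows
    "let wh = normalize_row N w; vh = normalize_col N v; om = Im lam1;
         yh = normalize_real N y0
     in asym (\<lambda>t. K2 N A t y0 z0)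
             (\<lambda>t. (cmod (rowmul wh (cvec z0)) / cmod (rowmul wh (cvec yh)))
                  * (rnorm N (Theta_vec vh wh om t z0) / rnorm N (Theta_vec vh wh om t yh)))
      \<and> asym (\<lambda>t. K1 N A t y0)
             (\<lambda>t. (1 / cmod (rowmul wh (cvec yh)))
                  * (mnorm N (Theta_mat vh wh om t) / rnorm N (Theta_vec vh wh om t yh)))"
proof -
  interpret dominant_complex_pair N A lam1 w v
    using norm Lam im_pos simple1 w v wv_real by unfold_locales (simp_all add: is_cnorm_def)
  show ?thesis
    unfolding Let_def using asym_K2_K1[OF z0 wy wz] by blast
qed

end
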